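(* Let $X=T(\mathcal{F}_0,(\theta_n,\mathcal{F}_n)_{n=1}^\infty)$ be a mixed Tsirelson space where $(\mathcal{F}_n)_{n\ge0}$ are regular families with $\mathcal{S}_0\subseteq\mathcal{F}_n$ for all $n\ge0$, $\mathcal{F}=\bigcup_{n\ge0}\mathcal{F}_n$ is regular, and $(\theta_n)_{n\ge1}$ is a nonincreasing null sequence in $(0,1)$. Let $\varepsilon>0$ and let $\mathcal{G}$ be a regular family. Assume there exists $m_0\in\mathbb{N}$ such that for all $m\ge m_0$ there exist $n_1,\dots,n_s\in\mathbb{N}$ with $\theta_m<\varepsilon\theta_{n_1}\cdots\theta_{n_s}$ and $\mathcal{F}_m\subseteq[\mathcal{G},\mathcal{F}_{n_1},\dots,\mathcal{F}_{n_s}]$. Then there is a constant $K=K(\varepsilon,m_0)<\infty$ such that for any normalized block basic sequence $(x_k)_{k=1}^p$ (of the unit vector basis) in $X$ and any real numbers $(a_k)_{k=1}^p$, $$\Big\|\sum_{k=1}^pa_kx_k\Big\|\le K\Big\|\sum_{k=1}^pa_ke_{i_k}\Big\|+2\varepsilon\rho_1\Big(\sum_{k=1}^pa_ke_{i_k}\Big)+2\rho_2\Big(\sum_{k=1}^pa_ke_{i_k}\Big)+2\varepsilon\sum_{k=1}^p|a_k|,$$ where $i_k=\max\operatorname{supp}x_k$, and $\rho_1,\rho_2$ are the norms of $T(\mathcal{F},(\theta_n,\mathcal{F}_n)_{n=1}^\infty)$ and $T(\mathcal{G},(\theta_n,\mathcal{F}_n)_{n=1}^\infty)$ respectively.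
   Context: For finite $E,F\subseteq\mathbb{N}$, $E<F$ means $\max E<\min F$. A family of finite subsets of $\mathbb{N}$ is regular if it is hereditary, spreading (if $\{n_1<\dots<n_k\}$ is in it and $m_i\ge n_i$, $m_1<\dots<m_k$, then $\{m_1,\dots,m_k\}$ is in it), and compact in $2^{\mathbb{N}}$. $\mathcal{S}_0=\{\{n\}:n\in\mathbb{N}\}\cup\{\emptyset\}$. For $x=\sum a_ke_k\in c_{00}$ and finite $E$, $Ex=\sum_{k\in E}a_ke_k$; $\|x\|_{\mathcal{H}}=\sup_{F\in\mathcal{H}}\sum_{k\in F}|a_k|$. $E_1<\dots<E_k$ is $\mathcal{M}$-admissible if $\{\min E_i\}_{i=1}^k\in\mathcal{M}$. $\mathcal{M}[\mathcal{N}]=\{\bigcup_{i=1}^kF_i:F_i\in\mathcal{N},\ (F_i)\ \mathcal{M}\text{-admissible}\}$; inductively $[\mathcal{M}_1,\mathcal{M}_2]=\mathcal{M}_1[\mathcal{M}_2]$, $[\mathcal{M}_1,\dots,\mathcal{M}_{i+1}]=[\mathcal{M}_1,\dots,\mathcal{M}_i][\mathcal{M}_{i+1}]$. For a regular family $\mathcal{H}$ (playing the role of the first family), $T(\mathcal{H},(\theta_n,\mathcal{F}_n)_{n=1}^\infty)$ is the completion of $c_{00}$ under the norm implicitly defined by $\|x\|=\max\{\|x\|_{\mathcal{H}},\sup_n\sup\theta_n\sum_{i=1}^k\|E_ix\|\}$, the inner supremum over $\mathcal{F}_n$-admissible sequences $(E_i)_{i=1}^k$. *)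

theory Defs
  imports Complex_Main
begin

text \<open>Vectors of c00 are functions nat => real (finitely supported where relevant).
  Families are sets of finite subsets of nat.\<close>

definition supp :: "(nat \<Rightarrow> real) \<Rightarrow> nat set" where
  "supp x = {i. x i \<noteq> 0}"

definition unitvec :: "nat \<Rightarrow> nat \<Rightarrow> real" where
  "unitvec i = (\<lambda>j. if j = i then 1 else 0)"

definition restr :: "nat set \<Rightarrow> (nat \<Rightarrow> real) \<Rightarrow> nat \<Rightarrow> real" where
  "restr E x = (\<lambda>k. if k \<in> E then x k else 0)"

definition hereditary :: "nat set set \<Rightarrow> bool" where
  "hereditary M \<longleftrightarrow> (\<forall>F\<in>M. \<forall>G. G \<subseteq> F \<longrightarrow> G \<in> M)"

definition spreading :: "nat set set \<Rightarrow> bool" where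
  "spreading M \<longleftrightarrow> (\<forall>F\<in>M. \<forall>G. finite G \<and> card G = card F \<and>
      (\<forall>i<card F. sorted_list_of_set F ! i \<le> sorted_list_of_set G ! i) \<longrightarrow> G \<in> M)"

text \<open>Compactness in 2^N (product topology) = closedness: a set all of whose initial
  segments are initial segments of members belongs to the family.\<close>
definition compact_family :: "nat set set \<Rightarrow> bool" where
  "compact_family M \<longleftrightarrow> (\<forall>A::nat set. (\<forall>n. \<exists>F\<in>M. F \<inter> {..<n} = A \<inter> {..<n}) \<longrightarrow> A \<in> M)"

definition regular :: "nat set set \<Rightarrow> bool" where
  "regular M \<longleftrightarrow> (\<forall>F\<in>M. finite F) \<and> hereditary M \<and> spreading M \<and> compact_family M"

definition S0 :: "nat set set" where
  "S0 = {{n} | n. True} \<union> {{}}"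

definition admissible :: "nat set set \<Rightarrow> nat set list \<Rightarrow> bool" where
  "admissible M Es \<longleftrightarrow> (\<forall>E\<in>set Es. finite E \<and> E \<noteq> {}) \<and>
     (\<forall>i. Suc i < length Es \<longrightarrow> Max (Es ! i) < Min (Es ! Suc i)) \<and>
     Min ` set Es \<in> M"

definition fam_comp :: "nat set set \<Rightarrow> nat set set \<Rightarrow> nat set set" where
  "fam_comp M N = {\<Union>(set Fl) | Fl. admissible M Fl \<and> (\<forall>F\<in>set Fl. F \<in> N)}"

definition fam_bracket :: "nat set set \<Rightarrow> nat set set list \<Rightarrow> nat set set" where
  "fam_bracket M1 Ms = foldl fam_comp M1 Ms"

definition hnorm :: "nat set set \<Rightarrow> (nat \<Rightarrow> real) \<Rightarrow> real" where
  "hnorm H x = (SUP F\<in>H. \<Sum>k\<in>F. \<bar>x k\<bar>)"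

definition tstep :: "nat set set \<Rightarrow> (nat \<Rightarrow> real) \<Rightarrow> (nat \<Rightarrow> nat set set)
    \<Rightarrow> ((nat \<Rightarrow> real) \<Rightarrow> real) \<Rightarrow> (nat \<Rightarrow> real) \<Rightarrow> real" where
  "tstep H \<theta> Fs f x = max (hnorm H x)
     (SUP n\<in>{1..}. SUP Es\<in>{Es. admissible (Fs n) Es}. \<theta> n * (\<Sum>E\<leftarrow>Es. f (restr E x)))"

primrec titer :: "nat set set \<Rightarrow> (nat \<Rightarrow> real) \<Rightarrow> (nat \<Rightarrow> nat set set)
    \<Rightarrow> nat \<Rightarrow> (nat \<Rightarrow> real) \<Rightarrow> real" where
  "titer H \<theta> Fs 0 = hnorm H"
| "titer H \<theta> Fs (Suc j) = tstep H \<theta> Fs (titer H \<theta> Fs j)"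

text \<open>Norm of T(H,(theta_n,F_n)_{n>=1}) on c00: the standard construction as the
  supremum of the increasing iterates (the solution of the implicit equation).\<close>
definition tnorm :: "nat set set \<Rightarrow> (nat \<Rightarrow> real) \<Rightarrow> (nat \<Rightarrow> nat set set)
    \<Rightarrow> (nat \<Rightarrow> real) \<Rightarrow> real" where
  "tnorm H \<theta> Fs x = (SUP j. titer H \<theta> Fs j x)"

end

theory Submission
  imports Defs
begin

text \<open>Write \<open>z\<^sub>B = \<Sum>\<^sub>k\<^sub>\<in>\<^sub>B a\<^sub>k e_(i\<^sub>k)\<close> and \<open>\<theta>* = \<theta> (max 1 m0)\<close>. The norm of \<open>X\<close> is the supremum of the
  iterates of its implicit equation, and all iterates are bounded at once by induction, for every
  vector \<open>\<Sum>\<^sub>k\<^sub>\<in>\<^sub>B a\<^sub>k (T\<^sub>k x\<^sub>k)\<close> with the blocks cut down to arbitrary sets \<open>T\<^sub>k\<close>, and with a weight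
  \<open>0 < w \<le> 1\<close>: if \<open>w \<theta>\<^sub>1\<^sup>d < \<epsilon>\<close>, then \<open>w \<parallel>\<Sum>\<^sub>k\<^sub>\<in>\<^sub>B a\<^sub>k (T\<^sub>k x\<^sub>k)\<parallel> \<le> (1 + d/\<theta>*) w \<parallel>z\<^sub>B\<parallel> + w \<rho>\<^sub>2(z\<^sub>B) + \<epsilon> \<Sum>\<^sub>k\<^sub>\<in>\<^sub>B |a\<^sub>k|\<close>.
  Weights \<open>w \<le> \<epsilon>\<close> are handled by the triangle inequality. At a node \<open>\<theta>\<^sub>n \<Sum> \<parallel>E\<^sub>i y\<parallel>\<close> with
  \<open>(E\<^sub>i)\<close> \<open>F\<^sub>n\<close>-admissible, the blocks meeting a single \<open>E\<^sub>i\<close> go to the induction hypothesis with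
  weight \<open>w \<theta>\<^sub>n\<close>, and the maxima \<open>i\<^sub>k\<close> of the blocks meeting several \<open>E\<^sub>i\<close> spread a subset of the
  minima of the \<open>E\<^sub>i\<close>. If \<open>n < m0\<close>, these blocks cost at most \<open>w \<parallel>z\<^sub>B\<parallel>/\<theta>*\<close>, paid for by one unit
  of \<open>d\<close>. If \<open>n \<ge> m0\<close>, the inclusion \<open>F\<^sub>n \<subseteq> [G, F\<^sub>n\<^sub>1, \<dots>, F\<^sub>n\<^sub>s]\<close> groups the \<open>E\<^sub>i\<close>: blocks meeting
  two groups have \<open>G\<close>-spread maxima and contribute \<open>w \<rho>\<^sub>2(z\<^sub>B)\<close>, while a block inside one group
  contributes at most \<open>\<theta>\<^sub>n / (\<theta>\<^sub>n\<^sub>1 \<cdots> \<theta>\<^sub>n\<^sub>s) < \<epsilon>\<close> times \<open>|a\<^sub>k|\<close>, and the children get weight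
  \<open>w \<theta>\<^sub>n < \<epsilon>\<close>. So \<open>K = 1 + D/\<theta>*\<close> with \<open>\<theta>\<^sub>1\<^sup>D < \<epsilon>\<close> works, even without the \<open>\<rho>\<^sub>1\<close> term.\<close>

section \<open>Finitely supported vectors and admissible sequences\<close>

definition l1norm :: "(nat \<Rightarrow> real) \<Rightarrow> real" where
  "l1norm x = (\<Sum>q\<in>supp x. \<bar>x q\<bar>)"

lemma supp_restr: "supp (restr E x) = E \<inter> supp x"
  by (auto simp: supp_def restr_def)

lemma restr_restr: "restr E (restr F x) = restr (E \<inter> F) x"
  by (auto simp: restr_def)

lemma restr_empty: "restr {} x = (\<lambda>_. 0)"
  by (auto simp: restr_def)

lemma finite_supp_restr: "finite (supp x) \<Longrightarrow> finite (supp (restr E x))"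
  by (simp add: supp_restr)

lemma finite_supp_scale: "finite (supp x) \<Longrightarrow> finite (supp (\<lambda>q. c * x q))"
  by (rule finite_subset[of _ "supp x"]) (auto simp: supp_def)

lemma finite_supp_sum:
  assumes "finite B" "\<forall>k\<in>B. finite (supp (u k))"
  shows "finite (supp (\<lambda>q. \<Sum>k\<in>B. c k * u k q))"
proof -
  have "supp (\<lambda>q. \<Sum>k\<in>B. c k * u k q) \<subseteq> (\<Union>k\<in>B. supp (u k))"
    by (auto simp: supp_def intro: ccontr sum.neutral)
  then show ?thesis
    using assms by (meson finite_UN_I finite_subset)
qed

lemma l1norm_zero: "l1norm (\<lambda>_. 0) = 0"
  by (simp add: l1norm_def supp_def)

lemma l1norm_nonneg: "0 \<le> l1norm x"
  by (simp add: l1norm_def sum_nonneg)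

lemma sum_abs_le_l1norm:
  assumes "finite (supp x)"
  shows "(\<Sum>k\<in>F. \<bar>x k\<bar>) \<le> l1norm x"
proof (cases "finite F")
  case True
  have "(\<Sum>k\<in>F. \<bar>x k\<bar>) = (\<Sum>k\<in>F \<inter> supp x. \<bar>x k\<bar>)"
    by (rule sum.mono_neutral_right) (auto simp: supp_def True)
  also have "\<dots> \<le> l1norm x"
    unfolding l1norm_def by (rule sum_mono2) (auto simp: assms)
  finally show ?thesis .
qed (simp add: l1norm_nonneg)

lemma l1norm_restr:
  assumes "finite (supp x)"
  shows "l1norm (restr E x) = (\<Sum>q\<in>supp x. if q \<in> E then \<bar>x q\<bar> else 0)"
proof -
  have "l1norm (restr E x) = (\<Sum>q\<in>E \<inter> supp x. \<bar>x q\<bar>)"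
    unfolding l1norm_def supp_restr by (rule sum.cong) (auto simp: restr_def)
  also have "\<dots> = (\<Sum>q\<in>supp x. if q \<in> E then \<bar>x q\<bar> else 0)"
    using assms by (simp add: sum.If_cases Int_commute)
  finally show ?thesis .
qed

lemma admissible_Nil: "{} \<in> M \<Longrightarrow> admissible M []"
  by (simp add: admissible_def)

lemma admissible_nth:
  "admissible M Es \<Longrightarrow> i < length Es \<Longrightarrow> finite (Es!i) \<and> Es!i \<noteq> {}"
  unfolding admissible_def by (auto dest: nth_mem)

lemma Min_le_Max: "finite A \<Longrightarrow> A \<noteq> {} \<Longrightarrow> Min A \<le> Max A"
  by (meson Max_ge Min_le ex_in_conv order.trans)

lemma admissible_Max_less_Min:
  assumes adm: "admissible M Es" and "i < i'" "i' < length Es"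
  shows "Max (Es!i) < Min (Es!i')"
  using assms(2,3)
proof (induction i')
  case (Suc i')
  have step: "Max (Es!i') < Min (Es!Suc i')"
    using adm Suc.prems unfolding admissible_def by auto
  show ?case
  proof (cases "i = i'")
    case False
    then have "Max (Es!i) < Min (Es!i')"
      using Suc by simp
    moreover have "Min (Es!i') \<le> Max (Es!i')"
      using admissible_nth[OF adm, of i'] Suc.prems by (simp add: Min_le_Max)
    ultimately show ?thesis
      using step by linarith
  qed (use step in simp)
qed simp

lemma admissible_Min_less_Min:
  assumes "admissible M Es" "i < i'" "i' < length Es"
  shows "Min (Es!i) < Min (Es!i')"
proof -
  have "Min (Es!i) \<le> Max (Es!i)"
    using admissible_nth[OF assms(1), of i] assms(2,3) by (simp add: Min_le_Max)
  then show ?thesis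
    using admissible_Max_less_Min[OF assms] by linarith
qed

lemma admissible_Min_mono:
  assumes "admissible M Es" "i \<le> i'" "i' < length Es"
  shows "Min (Es!i) \<le> Min (Es!i')"
  using admissible_Min_less_Min[OF assms(1) _ assms(3), of i] assms(2)
  by (cases "i = i'") auto

lemma admissible_mem_unique:
  assumes adm: "admissible M Es" and i: "i < length Es" "q \<in> Es!i"
    and i': "i' < length Es" "q \<in> Es!i'"
  shows "i = i'"
proof -
  have mem: "Min (Es!j) \<le> q \<and> q \<le> Max (Es!j)" if "j < length Es" "q \<in> Es!j" for j
    using admissible_nth[OF adm that(1)] that(2) by auto
  have False if "j < j'" "j' < length Es" "q \<in> Es!j" "q \<in> Es!j'" for j j'
    using admissible_Max_less_Min[OF adm that(1,2)] mem[of j] mem[of j'] that by linarith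
  then show ?thesis
    using i i' by (metis linorder_neqE_nat)
qed

lemma admissible_sum_l1norm_le:
  assumes adm: "admissible M Es" and fx: "finite (supp x)"
  shows "(\<Sum>E\<leftarrow>Es. l1norm (restr E x)) \<le> l1norm x"
proof -
  have "(\<Sum>E\<leftarrow>Es. l1norm (restr E x))
      = (\<Sum>i<length Es. \<Sum>q\<in>supp x. if q \<in> Es!i then \<bar>x q\<bar> else 0)"
    by (simp add: sum_list_sum_nth atLeast0LessThan l1norm_restr[OF fx])
  also have "\<dots> = (\<Sum>q\<in>supp x. \<Sum>i<length Es. if q \<in> Es!i then \<bar>x q\<bar> else 0)"
    by (rule sum.swap)
  also have "\<dots> \<le> (\<Sum>q\<in>supp x. \<bar>x q\<bar>)"
  proof (rule sum_mono)
    fix q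
    define I where "I = {i. i < length Es \<and> q \<in> Es!i}"
    have "card I \<le> Suc 0"
      using admissible_mem_unique[OF adm] by (subst card_le_Suc0_iff_eq) (auto simp: I_def)
    then have "real (card I) * \<bar>x q\<bar> \<le> \<bar>x q\<bar>"
      by (simp add: mult_left_le_one_le)
    moreover have "(\<Sum>i<length Es. if q \<in> Es!i then \<bar>x q\<bar> else 0) = real (card I) * \<bar>x q\<bar>"
      by (simp add: sum.If_cases Int_def conj_commute I_def)
    ultimately show "(\<Sum>i<length Es. if q \<in> Es!i then \<bar>x q\<bar> else 0) \<le> \<bar>x q\<bar>"
      by simp
  qed
  finally show ?thesis by (simp add: l1norm_def)
qed

lemma admissible_filter_nonempty:
  assumes fin: "\<forall>i<m. finite (R i)"
    and succ: "\<forall>i i'. i < i' \<longrightarrow> i' < m \<longrightarrow> R i \<noteq> {} \<longrightarrow> R i' \<noteq> {} \<longrightarrow> Max (R i) < Min (R i')"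
    and mins: "{Min (R i) | i. i < m \<and> R i \<noteq> {}} \<in> M"
  shows "admissible M (map R (filter (\<lambda>i. R i \<noteq> {}) [0..<m]))"
proof -
  define idx where "idx = filter (\<lambda>i. R i \<noteq> {}) [0..<m]"
  have sorted: "sorted_wrt (<) idx"
    unfolding idx_def by (simp add: sorted_wrt_filter)
  have set_idx: "set idx = {i. i < m \<and> R i \<noteq> {}}"
    unfolding idx_def by auto
  have "Max (R (idx!i)) < Min (R (idx!Suc i))" if "Suc i < length idx" for i
  proof -
    have "idx!i < idx!Suc i"
      using sorted_wrt_nth_less[OF sorted, of i "Suc i"] that by simp
    moreover have "idx!i \<in> set idx" "idx!Suc i \<in> set idx"
      using that by auto
    ultimately show ?thesis
      using succ set_idx by auto
  qed
  moreover have "Min ` set (map R idx) = {Min (R i) | i. i < m \<and> R i \<noteq> {}}"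
    using set_idx by auto
  ultimately show ?thesis
    unfolding admissible_def idx_def[symmetric] using set_idx fin mins by auto
qed

lemma sum_list_filter_nonempty:
  assumes "\<And>i. i < m \<Longrightarrow> R i = {} \<Longrightarrow> f (R i) = 0"
  shows "(\<Sum>E\<leftarrow>map R (filter (\<lambda>i. R i \<noteq> {}) [0..<m]). f E) = (\<Sum>i<m. f (R i))"
proof -
  have "(\<Sum>E\<leftarrow>map R (filter (\<lambda>i. R i \<noteq> {}) [0..<m]). f E)
      = (\<Sum>i\<leftarrow>filter (\<lambda>i. R i \<noteq> {}) [0..<m]. f (R i))"
    by (simp add: comp_def)
  also have "\<dots> = (\<Sum>i\<leftarrow>[0..<m]. f (R i))"
    by (rule sum_list_map_filter) (use assms in auto)
  finally show ?thesis
    by (simp add: sum_list_distinct_conv_sum_set atLeast0LessThan)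
qed

lemma sorted_list_of_set_image:
  assumes "finite I" "strict_mono_on I g"
  shows "sorted_list_of_set (g ` I) = map g (sorted_list_of_set I)"
proof -
  have "sorted_wrt (<) (map g (sorted_list_of_set I))"
    unfolding sorted_wrt_map
    by (rule sorted_wrt_mono_rel[OF _ strict_sorted_list_of_set])
      (use assms in \<open>auto dest: strict_mono_onD\<close>)
  moreover have "length (map g (sorted_list_of_set I)) = card (g ` I)"
    using card_image[OF strict_mono_on_imp_inj_on[OF assms(2)]] by simp
  ultimately show ?thesis
    using sorted_list_of_set_unique[of "g ` I" "map g (sorted_list_of_set I)"] assms(1) by auto
qed

lemma spreading_image:
  fixes I :: "'a::linorder set"
  assumes her: "hereditary F" and spr: "spreading F" and X: "X \<in> F" and fin: "finite I"
    and h: "strict_mono_on I h" "h ` I \<subseteq> X"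
    and g: "strict_mono_on I g" and hg: "\<forall>i\<in>I. h i \<le> g i"
  shows "g ` I \<in> F"
proof -
  have hI: "h ` I \<in> F"
    using her X h(2) unfolding hereditary_def by blast
  have card: "card (g ` I) = card (h ` I)" "card (h ` I) = length (sorted_list_of_set I)"
    using card_image[OF strict_mono_on_imp_inj_on[OF h(1)]]
      card_image[OF strict_mono_on_imp_inj_on[OF g]] fin by simp_all
  have "sorted_list_of_set (h ` I) ! i \<le> sorted_list_of_set (g ` I) ! i"
    if "i < card (h ` I)" for i
  proof -
    have "sorted_list_of_set I ! i \<in> I"
      using that card(2) fin nth_mem set_sorted_list_of_set by metis
    then show ?thesis
      using sorted_list_of_set_image[OF fin h(1)] sorted_list_of_set_image[OF fin g]
        that card(2) hg by simp
  qed
  then show ?thesis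
    using spr hI card fin unfolding spreading_def by blast
qed

lemma hnorm_bdd: "finite (supp x) \<Longrightarrow> bdd_above ((\<lambda>F. \<Sum>k\<in>F. \<bar>x k\<bar>) ` H)"
  using sum_abs_le_l1norm by (intro bdd_aboveI[of _ "l1norm x"]) auto

lemma hnorm_upper: "finite (supp x) \<Longrightarrow> F \<in> H \<Longrightarrow> (\<Sum>k\<in>F. \<bar>x k\<bar>) \<le> hnorm H x"
  unfolding hnorm_def by (rule cSUP_upper[OF _ hnorm_bdd])

lemma hnorm_le_l1norm: "H \<noteq> {} \<Longrightarrow> finite (supp x) \<Longrightarrow> hnorm H x \<le> l1norm x"
  unfolding hnorm_def by (rule cSUP_least) (use sum_abs_le_l1norm in auto)

lemma hnorm_nonneg:
  assumes "H \<noteq> {}" "finite (supp x)"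
  shows "0 \<le> hnorm H x"
proof -
  obtain F where "F \<in> H"
    using assms(1) by auto
  then show ?thesis
    using hnorm_upper[OF assms(2), of F] by (meson order_trans sum_nonneg abs_ge_zero)
qed

lemma hnorm_restr_le:
  assumes "H \<noteq> {}" "finite (supp x)"
  shows "hnorm H (restr E x) \<le> hnorm H x"
  unfolding hnorm_def[of H "restr E x"]
proof (rule cSUP_least)
  fix F assume "F \<in> H"
  have "(\<Sum>k\<in>F. \<bar>restr E x k\<bar>) \<le> (\<Sum>k\<in>F. \<bar>x k\<bar>)"
    by (rule sum_mono) (simp add: restr_def)
  also have "\<dots> \<le> hnorm H x"
    by (rule hnorm_upper[OF assms(2) \<open>F \<in> H\<close>])
  finally show "(\<Sum>k\<in>F. \<bar>restr E x k\<bar>) \<le> hnorm H x" .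
qed (rule assms(1))

lemma hnorm_add_le:
  assumes "H \<noteq> {}" "finite (supp x)" "finite (supp y)"
  shows "hnorm H (\<lambda>q. x q + y q) \<le> hnorm H x + hnorm H y"
  unfolding hnorm_def[of H "\<lambda>q. x q + y q"]
proof (rule cSUP_least)
  fix F assume "F \<in> H"
  have "(\<Sum>k\<in>F. \<bar>x k + y k\<bar>) \<le> (\<Sum>k\<in>F. \<bar>x k\<bar>) + (\<Sum>k\<in>F. \<bar>y k\<bar>)"
    by (simp add: sum.distrib[symmetric] sum_mono abs_triangle_ineq)
  also have "\<dots> \<le> hnorm H x + hnorm H y"
    using hnorm_upper assms(2,3) \<open>F \<in> H\<close> by (meson add_mono)
  finally show "(\<Sum>k\<in>F. \<bar>x k + y k\<bar>) \<le> hnorm H x + hnorm H y" .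
qed (rule assms(1))

lemma hnorm_scale_le:
  assumes "H \<noteq> {}" "finite (supp x)"
  shows "hnorm H (\<lambda>q. c * x q) \<le> \<bar>c\<bar> * hnorm H x"
  unfolding hnorm_def[of H "\<lambda>q. c * x q"]
proof (rule cSUP_least)
  fix F assume "F \<in> H"
  have "(\<Sum>k\<in>F. \<bar>c * x k\<bar>) = \<bar>c\<bar> * (\<Sum>k\<in>F. \<bar>x k\<bar>)"
    by (simp add: abs_mult sum_distrib_left)
  also have "\<dots> \<le> \<bar>c\<bar> * hnorm H x"
    using hnorm_upper[OF assms(2) \<open>F \<in> H\<close>] by (intro mult_left_mono) auto
  finally show "(\<Sum>k\<in>F. \<bar>c * x k\<bar>) \<le> \<bar>c\<bar> * hnorm H x" .
qed (rule assms(1))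

section \<open>The norm as the supremum of the iterates\<close>

locale tsirelson_norm =
  fixes H :: "nat set set" and \<theta> :: "nat \<Rightarrow> real" and Fs :: "nat \<Rightarrow> nat set set"
  assumes H_nonempty: "H \<noteq> {}"
    and theta_bounds: "\<And>n. n \<ge> 1 \<Longrightarrow> 0 < \<theta> n \<and> \<theta> n < 1"
    and empty_mem: "\<And>n. {} \<in> Fs n"
begin

abbreviation iterate :: "nat \<Rightarrow> (nat \<Rightarrow> real) \<Rightarrow> real" where
  "iterate j \<equiv> titer H \<theta> Fs j"

abbreviation tsnorm :: "(nat \<Rightarrow> real) \<Rightarrow> real" where
  "tsnorm \<equiv> tnorm H \<theta> Fs"

lemma tstep_term_bounds:
  assumes P: "\<And>E. 0 \<le> f (restr E x) \<and> f (restr E x) \<le> l1norm (restr E x)"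
    and fx: "finite (supp x)" and n: "n \<ge> 1" and adm: "admissible (Fs n) Es"
  shows "0 \<le> \<theta> n * (\<Sum>E\<leftarrow>Es. f (restr E x)) \<and> \<theta> n * (\<Sum>E\<leftarrow>Es. f (restr E x)) \<le> l1norm x"
proof -
  have s0: "0 \<le> (\<Sum>E\<leftarrow>Es. f (restr E x))"
    using P by (intro sum_list_nonneg) auto
  have "(\<Sum>E\<leftarrow>Es. f (restr E x)) \<le> (\<Sum>E\<leftarrow>Es. l1norm (restr E x))"
    using P by (simp add: sum_list_mono)
  also have "\<dots> \<le> l1norm x"
    by (rule admissible_sum_l1norm_le[OF adm fx])
  finally have s1: "(\<Sum>E\<leftarrow>Es. f (restr E x)) \<le> l1norm x" .
  have "\<theta> n * (\<Sum>E\<leftarrow>Es. f (restr E x)) \<le> 1 * (\<Sum>E\<leftarrow>Es. f (restr E x))"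
    using theta_bounds[OF n] s0 by (intro mult_right_mono) auto
  then show ?thesis
    using s0 s1 theta_bounds[OF n] by simp
qed

lemma tstep_upper:
  assumes P: "\<And>E. 0 \<le> f (restr E x) \<and> f (restr E x) \<le> l1norm (restr E x)"
    and fx: "finite (supp x)" and n: "n \<ge> 1" and adm: "admissible (Fs n) Es"
  shows "\<theta> n * (\<Sum>E\<leftarrow>Es. f (restr E x)) \<le> tstep H \<theta> Fs f x"
proof -
  let ?t = "\<lambda>n Es. \<theta> n * (\<Sum>E\<leftarrow>Es. f (restr E x))"
  have bdd: "bdd_above (?t n ` {Es. admissible (Fs n) Es})" if "n \<ge> 1" for n
    using tstep_term_bounds[OF P fx that] by (intro bdd_aboveI[of _ "l1norm x"]) auto
  have sup_le: "(SUP Es\<in>{Es. admissible (Fs n) Es}. ?t n Es) \<le> l1norm x" if "n \<ge> 1" for n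
    by (rule cSUP_least) (use admissible_Nil empty_mem tstep_term_bounds[OF P fx that] in auto)
  have "?t n Es \<le> (SUP Es\<in>{Es. admissible (Fs n) Es}. ?t n Es)"
    by (rule cSUP_upper[OF _ bdd[OF n]]) (use adm in simp)
  also have "\<dots> \<le> (SUP n\<in>{1..}. SUP Es\<in>{Es. admissible (Fs n) Es}. ?t n Es)"
    by (rule cSUP_upper) (use n sup_le in \<open>auto intro: bdd_aboveI[of _ "l1norm x"]\<close>)
  finally show ?thesis
    unfolding tstep_def by simp
qed

lemma hnorm_le_tstep: "hnorm H x \<le> tstep H \<theta> Fs f x"
  unfolding tstep_def by simp

lemma tstep_least:
  assumes "hnorm H x \<le> c"
    and "\<And>n Es. n \<ge> 1 \<Longrightarrow> admissible (Fs n) Es \<Longrightarrow> \<theta> n * (\<Sum>E\<leftarrow>Es. f (restr E x)) \<le> c"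
  shows "tstep H \<theta> Fs f x \<le> c"
proof -
  have "(SUP n\<in>{1..}. SUP Es\<in>{Es. admissible (Fs n) Es}. \<theta> n * (\<Sum>E\<leftarrow>Es. f (restr E x))) \<le> c"
    by (intro cSUP_least) (use admissible_Nil empty_mem assms(2) in auto)
  then show ?thesis
    unfolding tstep_def using assms(1) by simp
qed

lemma titer_bounds: "finite (supp x) \<Longrightarrow> 0 \<le> iterate j x \<and> iterate j x \<le> l1norm x"
proof (induction j arbitrary: x)
  case 0
  then show ?case
    using hnorm_le_l1norm hnorm_nonneg H_nonempty by simp
next
  case (Suc j)
  have P: "\<And>E. 0 \<le> iterate j (restr E x) \<and> iterate j (restr E x) \<le> l1norm (restr E x)"
    using Suc.IH finite_supp_restr Suc.prems by blast
  have "tstep H \<theta> Fs (iterate j) x \<le> l1norm x"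
    by (rule tstep_least)
      (use hnorm_le_l1norm[OF H_nonempty Suc.prems] tstep_term_bounds[OF P Suc.prems] in auto)
  moreover have "0 \<le> tstep H \<theta> Fs (iterate j) x"
    using hnorm_le_tstep hnorm_nonneg[OF H_nonempty Suc.prems] order_trans by blast
  ultimately show ?case
    by simp
qed

lemma titer_Suc_upper:
  assumes "n \<ge> 1" "admissible (Fs n) Es" "finite (supp x)"
  shows "\<theta> n * (\<Sum>E\<leftarrow>Es. iterate j (restr E x)) \<le> iterate (Suc j) x"
proof -
  have "0 \<le> iterate j (restr E x) \<and> iterate j (restr E x) \<le> l1norm (restr E x)" for E
    using titer_bounds finite_supp_restr assms(3) by blast
  from tstep_upper[OF this assms(3,1,2)] show ?thesis
    by simp
qed

lemma titer_zero: "iterate j (\<lambda>_. 0) = 0"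
  using titer_bounds[of "\<lambda>_. 0" j] by (simp add: l1norm_zero supp_def)

lemma titer_restr_le: "finite (supp x) \<Longrightarrow> iterate j (restr E x) \<le> iterate j x"
proof (induction j arbitrary: x E)
  case 0
  then show ?case
    using hnorm_restr_le[OF H_nonempty] by simp
next
  case (Suc j)
  show ?case
    unfolding titer.simps
  proof (rule tstep_least)
    show "hnorm H (restr E x) \<le> tstep H \<theta> Fs (iterate j) x"
      using hnorm_restr_le[OF H_nonempty Suc.prems] hnorm_le_tstep order_trans by blast
    fix n Es assume n: "1 \<le> n" and adm: "admissible (Fs n) Es"
    have "iterate j (restr E' (restr E x)) \<le> iterate j (restr E' x)" for E'
      using Suc.IH[of "restr E' x" E] finite_supp_restr[OF Suc.prems] by (simp add: restr_restr Int_commute)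
    then have "\<theta> n * (\<Sum>E'\<leftarrow>Es. iterate j (restr E' (restr E x)))
        \<le> \<theta> n * (\<Sum>E'\<leftarrow>Es. iterate j (restr E' x))"
      using theta_bounds[OF n] by (intro mult_left_mono sum_list_mono) auto
    also have "\<dots> \<le> tstep H \<theta> Fs (iterate j) x"
      using titer_Suc_upper[OF n adm Suc.prems] by simp
    finally show "\<theta> n * (\<Sum>E'\<leftarrow>Es. iterate j (restr E' (restr E x))) \<le> tstep H \<theta> Fs (iterate j) x" .
  qed
qed

lemma titer_le_Suc: "finite (supp x) \<Longrightarrow> iterate j x \<le> iterate (Suc j) x"
proof (induction j arbitrary: x)
  case 0
  then show ?case
    using hnorm_le_tstep by simp
next
  case (Suc j)
  show ?case
    unfolding titer.simps(2)[of H \<theta> Fs "Suc j"] titer.simps(2)[of H \<theta> Fs j]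
  proof (rule tstep_least)
    fix n Es assume n: "1 \<le> n" and adm: "admissible (Fs n) Es"
    have "\<theta> n * (\<Sum>E\<leftarrow>Es. iterate j (restr E x)) \<le> \<theta> n * (\<Sum>E\<leftarrow>Es. iterate (Suc j) (restr E x))"
      using Suc.IH finite_supp_restr[OF Suc.prems] theta_bounds[OF n]
      by (intro mult_left_mono sum_list_mono) auto
    also have "\<dots> \<le> iterate (Suc (Suc j)) x"
      by (rule titer_Suc_upper[OF n adm Suc.prems])
    finally show "\<theta> n * (\<Sum>E\<leftarrow>Es. iterate j (restr E x)) \<le> tstep H \<theta> Fs (tstep H \<theta> Fs (iterate j)) x"
      by simp
  qed (rule hnorm_le_tstep)
qed

lemma titer_add_le:
  "finite (supp x) \<Longrightarrow> finite (supp y) \<Longrightarrow> iterate j (\<lambda>q. x q + y q) \<le> iterate j x + iterate j y"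
proof (induction j arbitrary: x y)
  case 0
  then show ?case
    using hnorm_add_le[OF H_nonempty] by simp
next
  case (Suc j)
  show ?case
    unfolding titer.simps
  proof (rule tstep_least)
    show "hnorm H (\<lambda>q. x q + y q) \<le> tstep H \<theta> Fs (iterate j) x + tstep H \<theta> Fs (iterate j) y"
      using hnorm_add_le[OF H_nonempty Suc.prems] hnorm_le_tstep by (meson add_mono order_trans)
    fix n Es assume n: "1 \<le> n" and adm: "admissible (Fs n) Es"
    have "iterate j (restr E (\<lambda>q. x q + y q)) \<le> iterate j (restr E x) + iterate j (restr E y)" for E
    proof -
      have "restr E (\<lambda>q. x q + y q) = (\<lambda>q. restr E x q + restr E y q)"
        by (auto simp: restr_def)
      then show ?thesis
        using Suc.IH finite_supp_restr Suc.prems by simp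
    qed
    then have "\<theta> n * (\<Sum>E\<leftarrow>Es. iterate j (restr E (\<lambda>q. x q + y q)))
        \<le> \<theta> n * (\<Sum>E\<leftarrow>Es. iterate j (restr E x)) + \<theta> n * (\<Sum>E\<leftarrow>Es. iterate j (restr E y))"
      using theta_bounds[OF n]
      by (simp add: distrib_left[symmetric] sum_list_addf[symmetric] sum_list_mono)
    also have "\<dots> \<le> tstep H \<theta> Fs (iterate j) x + tstep H \<theta> Fs (iterate j) y"
      using titer_Suc_upper[OF n adm Suc.prems(1)] titer_Suc_upper[OF n adm Suc.prems(2)]
      by (simp add: add_mono)
    finally show "\<theta> n * (\<Sum>E\<leftarrow>Es. iterate j (restr E (\<lambda>q. x q + y q)))
        \<le> tstep H \<theta> Fs (iterate j) x + tstep H \<theta> Fs (iterate j) y" .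
  qed
qed

lemma titer_scale_le: "finite (supp x) \<Longrightarrow> iterate j (\<lambda>q. c * x q) \<le> \<bar>c\<bar> * iterate j x"
proof (induction j arbitrary: x)
  case 0
  then show ?case
    using hnorm_scale_le[OF H_nonempty] by simp
next
  case (Suc j)
  show ?case
    unfolding titer.simps
  proof (rule tstep_least)
    show "hnorm H (\<lambda>q. c * x q) \<le> \<bar>c\<bar> * tstep H \<theta> Fs (iterate j) x"
      using hnorm_scale_le[OF H_nonempty Suc.prems] hnorm_le_tstep[of x "iterate j"]
      by (meson abs_ge_zero mult_left_mono order_trans)
    fix n Es assume n: "1 \<le> n" and adm: "admissible (Fs n) Es"
    have "iterate j (restr E (\<lambda>q. c * x q)) \<le> \<bar>c\<bar> * iterate j (restr E x)" for E
    proof -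
      have "restr E (\<lambda>q. c * x q) = (\<lambda>q. c * restr E x q)"
        by (auto simp: restr_def)
      then show ?thesis
        using Suc.IH finite_supp_restr Suc.prems by simp
    qed
    then have "\<theta> n * (\<Sum>E\<leftarrow>Es. iterate j (restr E (\<lambda>q. c * x q)))
        \<le> \<bar>c\<bar> * (\<theta> n * (\<Sum>E\<leftarrow>Es. iterate j (restr E x)))"
      using theta_bounds[OF n]
      by (simp add: mult.left_commute sum_list_const_mult[symmetric] sum_list_mono)
    also have "\<dots> \<le> \<bar>c\<bar> * tstep H \<theta> Fs (iterate j) x"
      using titer_Suc_upper[OF n adm Suc.prems] by (intro mult_left_mono) auto
    finally show "\<theta> n * (\<Sum>E\<leftarrow>Es. iterate j (restr E (\<lambda>q. c * x q))) \<le> \<bar>c\<bar> * tstep H \<theta> Fs (iterate j) x" .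
  qed
qed

lemma titer_sum_le:
  assumes "finite B" "\<forall>k\<in>B. finite (supp (u k))"
  shows "iterate j (\<lambda>q. \<Sum>k\<in>B. c k * u k q) \<le> (\<Sum>k\<in>B. \<bar>c k\<bar> * iterate j (u k))"
  using assms
proof (induction B rule: finite_induct)
  case empty
  then show ?case
    using titer_zero by simp
next
  case (insert k B)
  have "finite (supp (\<lambda>q. c k * u k q))" "finite (supp (\<lambda>q. \<Sum>k\<in>B. c k * u k q))"
    using insert finite_supp_scale finite_supp_sum by auto
  then have "iterate j (\<lambda>q. \<Sum>k\<in>insert k B. c k * u k q)
      \<le> iterate j (\<lambda>q. c k * u k q) + iterate j (\<lambda>q. \<Sum>k\<in>B. c k * u k q)"
    using titer_add_le insert by simp
  also have "\<dots> \<le> \<bar>c k\<bar> * iterate j (u k) + (\<Sum>k\<in>B. \<bar>c k\<bar> * iterate j (u k))"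
    using titer_scale_le insert by (meson add_mono insertCI)
  finally show ?case
    using insert by simp
qed

lemma bdd_above_titer: "finite (supp x) \<Longrightarrow> bdd_above (range (\<lambda>j. iterate j x))"
  using titer_bounds by (intro bdd_aboveI[of _ "l1norm x"]) auto

lemma titer_le_tnorm: "finite (supp x) \<Longrightarrow> iterate j x \<le> tsnorm x"
  unfolding tnorm_def by (rule cSUP_upper[OF _ bdd_above_titer]) auto

lemma tnorm_nonneg: "finite (supp x) \<Longrightarrow> 0 \<le> tsnorm x"
  using titer_le_tnorm[of x 0] titer_bounds[of x 0] by linarith

lemma hnorm_le_tnorm: "finite (supp x) \<Longrightarrow> hnorm H x \<le> tsnorm x"
  using titer_le_tnorm[of x 0] by simp

lemma titer_tendsto_tnorm: "finite (supp x) \<Longrightarrow> (\<lambda>j. iterate j x) \<longlonglongrightarrow> tsnorm x"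
  unfolding tnorm_def
  by (rule LIMSEQ_incseq_SUP[OF bdd_above_titer]) (auto intro: incseq_SucI titer_le_Suc)

lemma tnorm_restr_le: "finite (supp x) \<Longrightarrow> tsnorm (restr E x) \<le> tsnorm x"
  unfolding tnorm_def[of H \<theta> Fs "restr E x"]
  by (rule cSUP_least) (use titer_restr_le titer_le_tnorm order_trans in blast)+

lemma tnorm_zero: "tsnorm (\<lambda>_. 0) = 0"
  unfolding tnorm_def by (simp add: titer_zero)

lemma tnorm_family:
  fixes m :: nat
  assumes n: "n \<ge> 1" and fx: "finite (supp x)"
    and fin: "\<forall>i<m. finite (R i)"
    and succ: "\<forall>i i'. i < i' \<longrightarrow> i' < m \<longrightarrow> R i \<noteq> {} \<longrightarrow> R i' \<noteq> {} \<longrightarrow> Max (R i) < Min (R i')"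
    and mins: "{Min (R i) | i. i < m \<and> R i \<noteq> {}} \<in> Fs n"
  shows "\<theta> n * (\<Sum>i<m. tsnorm (restr (R i) x)) \<le> tsnorm x"
proof -
  have "\<theta> n * (\<Sum>i<m. iterate j (restr (R i) x)) \<le> tsnorm x" for j
  proof -
    have "(\<Sum>E\<leftarrow>map R (filter (\<lambda>i. R i \<noteq> {}) [0..<m]). iterate j (restr E x))
        = (\<Sum>i<m. iterate j (restr (R i) x))"
      by (rule sum_list_filter_nonempty) (simp add: restr_empty titer_zero)
    then have "\<theta> n * (\<Sum>i<m. iterate j (restr (R i) x)) \<le> iterate (Suc j) x"
      using titer_Suc_upper[OF n admissible_filter_nonempty[OF fin succ mins] fx, of j] by simp
    then show ?thesis
      using titer_le_tnorm[OF fx] order_trans by blast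
  qed
  moreover have "(\<lambda>j. \<theta> n * (\<Sum>i<m. iterate j (restr (R i) x))) \<longlonglongrightarrow> \<theta> n * (\<Sum>i<m. tsnorm (restr (R i) x))"
    by (intro tendsto_mult_left tendsto_sum titer_tendsto_tnorm finite_supp_restr fx)
  ultimately show ?thesis
    by (intro LIMSEQ_le_const2) auto
qed

end

section \<open>Groupings of bracket-admissible sequences\<close>

lemma Min_Union:
  assumes "finite \<A>" "\<A> \<noteq> {}" "\<forall>A\<in>\<A>. finite A \<and> A \<noteq> {}"
  shows "Min (\<Union>\<A>) = Min (Min ` \<A>)"
proof (rule antisym)
  have fin: "finite (\<Union>\<A>)"
    using assms by auto
  have "Min (Min ` \<A>) \<in> Min ` \<A>"
    using assms(1,2) by (intro Min_in) auto
  then obtain A where A: "A \<in> \<A>" "Min (Min ` \<A>) = Min A"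
    by auto
  then show "Min (\<Union>\<A>) \<le> Min (Min ` \<A>)"
    using assms(3) fin by (metis Min_in Min_le UnionI)
  obtain A' where A': "A' \<in> \<A>" "Min (\<Union>\<A>) \<in> A'"
    using Min_in[OF fin] assms by auto
  then have "Min A' \<le> Min (\<Union>\<A>)"
    using assms(3) by simp
  then show "Min (Min ` \<A>) \<le> Min (\<Union>\<A>)"
    using A' assms(1) by (meson Min_le finite_imageI image_eqI order_trans)
qed

definition member_index :: "nat set list \<Rightarrow> nat \<Rightarrow> nat" where
  "member_index Fl v = (THE l. l < length Fl \<and> v \<in> Fl!l)"

lemma member_index_eq:
  assumes "admissible M Fl" "l < length Fl" "v \<in> Fl!l"
  shows "member_index Fl v = l"
  unfolding member_index_def
  by (rule the_equality) (use assms admissible_mem_unique[OF assms(1)] in auto)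

lemma admissible_fam_comp_index:
  assumes adm: "admissible (fam_comp B F) Es"
  obtains Fl L where "admissible B Fl" "\<forall>F'\<in>set Fl. F' \<in> F"
    "\<forall>i<length Es. L i < length Fl"
    "\<forall>l<length Fl. Fl!l = (\<lambda>i. Min (Es!i)) ` {i. i < length Es \<and> L i = l}"
    "mono_on {..<length Es} L"
proof -
  define m where "m = length Es"
  have "Min ` set Es \<in> fam_comp B F"
    using adm unfolding admissible_def by simp
  then obtain Fl where MFl: "Min ` set Es = \<Union>(set Fl)" and admF: "admissible B Fl"
    and FlF: "\<forall>F'\<in>set Fl. F' \<in> F"
    unfolding fam_comp_def by blast
  define r where "r = length Fl"
  define L where "L i = member_index Fl (Min (Es!i))" for i
  have L: "L i < r \<and> Min (Es!i) \<in> Fl!(L i)" if "i < m" for i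
  proof -
    have "Min (Es!i) \<in> \<Union>(set Fl)"
      using MFl that m_def by (metis image_eqI nth_mem)
    then obtain l where "l < r" "Min (Es!i) \<in> Fl!l"
      by (auto simp: in_set_conv_nth r_def)
    then show ?thesis
      using member_index_eq[OF admF] r_def L_def by simp
  qed
  have blocks: "Fl!l = (\<lambda>i. Min (Es!i)) ` {i. i < m \<and> L i = l}" if "l < r" for l
  proof
    show "Fl!l \<subseteq> (\<lambda>i. Min (Es!i)) ` {i. i < m \<and> L i = l}"
    proof
      fix v assume v: "v \<in> Fl!l"
      then have "v \<in> Min ` set Es"
        using MFl that r_def by (metis UnionI nth_mem)
      then obtain i where "i < m" "v = Min (Es!i)"
        by (auto simp: in_set_conv_nth m_def)
      then show "v \<in> (\<lambda>i. Min (Es!i)) ` {i. i < m \<and> L i = l}"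
        using member_index_eq[OF admF] that v r_def L_def by auto
    qed
  qed (use L in auto)
  have "L i \<le> L i'" if "i \<le> i'" "i' < m" for i i'
  proof (rule ccontr)
    assume "\<not> L i \<le> L i'"
    then have "Max (Fl!(L i')) < Min (Fl!(L i))"
      using admissible_Max_less_Min[OF admF] L that r_def by simp
    moreover have "Min (Es!i') \<le> Max (Fl!(L i'))" "Min (Fl!(L i)) \<le> Min (Es!i)"
      using L that admissible_nth[OF admF] r_def by simp_all
    moreover have "Min (Es!i) \<le> Min (Es!i')"
      using admissible_Min_mono[OF adm that(1)] that m_def by simp
    ultimately show False
      by linarith
  qed
  then have "mono_on {..<m} L"
    by (intro mono_onI) auto
  with that[OF admF FlF] blocks L show ?thesis
    unfolding m_def r_def by blast
qed

lemma Union_blocks_less: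
  fixes L :: "nat \<Rightarrow> nat"
  assumes adm: "admissible M Es" and mono: "mono_on {..<length Es} L" and "l < l'"
    and "q \<in> \<Union>((!) Es ` {i. i < length Es \<and> L i = l})" "q' \<in> \<Union>((!) Es ` {i. i < length Es \<and> L i = l'})"
  shows "q < q'"
proof -
  obtain i i' where i: "i < length Es" "L i = l" "q \<in> Es!i" and i': "i' < length Es" "L i' = l'" "q' \<in> Es!i'"
    using assms(4,5) by auto
  have "i < i'"
  proof (rule ccontr)
    assume "\<not> i < i'"
    then have "L i' \<le> L i"
      using mono_onD[OF mono, of i' i] i i' by simp
    then show False
      using i i' assms(3) by linarith
  qed
  then have "Max (Es!i) < Min (Es!i')"
    using admissible_Max_less_Min[OF adm] i' by simp
  moreover have "q \<le> Max (Es!i)" "Min (Es!i') \<le> q'"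
    using admissible_nth[OF adm] i i' by simp_all
  ultimately show ?thesis
    by linarith
qed

lemma admissible_fam_comp_blocks:
  assumes adm: "admissible (fam_comp B F) Es"
  obtains Us L where "admissible B Us"
    "\<forall>i<length Es. L i < length Us \<and> Es!i \<subseteq> Us!(L i)"
    "\<forall>l<length Us. (\<lambda>i. Min (Es!i)) ` {i. i < length Es \<and> L i = l} \<in> F"
    "mono_on {..<length Es} L"
proof -
  obtain Fl L where admF: "admissible B Fl" and FlF: "\<forall>F'\<in>set Fl. F' \<in> F"
    and L: "\<forall>i<length Es. L i < length Fl"
    and blocks: "\<forall>l<length Fl. Fl!l = (\<lambda>i. Min (Es!i)) ` {i. i < length Es \<and> L i = l}"
    and mono: "mono_on {..<length Es} L"
    using admissible_fam_comp_index[OF adm] by blast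
  define m where "m = length Es"
  define r where "r = length Fl"
  define I where "I l = {i. i < m \<and> L i = l}" for l
  define U where "U l = \<Union>((!) Es ` I l)" for l
  define Us where "Us = map U [0..<r]"
  have Es: "finite (Es!i) \<and> Es!i \<noteq> {}" if "i < m" for i
    using admissible_nth[OF adm] that m_def by simp
  have I: "I l \<noteq> {}" if "l < r" for l
    using admissible_nth[OF admF] blocks that r_def m_def I_def by fastforce
  have U: "U l \<noteq> {} \<and> finite (U l)" if "l < r" for l
    using I[OF that] Es that by (auto simp: U_def I_def)
  have U_Min: "Min (U l) = Min (Fl!l)" if "l < r" for l
  proof -
    have "Min (U l) = Min (Min ` (!) Es ` I l)"
      using Min_Union[of "(!) Es ` I l"] I[OF that] Es that by (auto simp: U_def I_def)
    also have "\<dots> = Min (Fl!l)"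
      using blocks that by (simp add: image_image I_def r_def m_def)
    finally show ?thesis .
  qed
  have "admissible B Us"
    unfolding admissible_def
  proof (intro conjI allI impI)
    show "\<forall>E\<in>set Us. finite E \<and> E \<noteq> {}"
      using U by (auto simp: Us_def)
    fix l assume "Suc l < length Us"
    then have l: "l < r" "Suc l < r"
      by (simp_all add: Us_def)
    then have "Max (U l) \<in> U l" "Min (U (Suc l)) \<in> U (Suc l)"
      using U[of l] U[of "Suc l"] by simp_all
    then have "Max (U l) < Min (U (Suc l))"
      using Union_blocks_less[OF adm mono, of l "Suc l"] unfolding U_def I_def m_def by blast
    then show "Max (Us!l) < Min (Us!Suc l)"
      using l by (simp add: Us_def)
  next
    have "Min ` set Us = (\<lambda>l. Min (U l)) ` {..<r}"
      by (auto simp: Us_def)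
    also have "\<dots> = (\<lambda>l. Min (Fl!l)) ` {..<r}"
      using U_Min by simp
    also have "\<dots> = Min ` ((!) Fl ` {0..<r})"
      by (simp add: image_image atLeast0LessThan)
    also have "\<dots> = Min ` set Fl"
      by (simp add: nth_image r_def)
    finally show "Min ` set Us \<in> B"
      using admF unfolding admissible_def by simp
  qed
  moreover have "\<forall>i<length Es. L i < length Us \<and> Es!i \<subseteq> Us!(L i)"
    using L by (auto simp: Us_def U_def I_def r_def m_def)
  moreover have "\<forall>l<length Us. (\<lambda>i. Min (Es!i)) ` {i. i < length Es \<and> L i = l} \<in> F"
    using blocks FlF nth_mem unfolding Us_def r_def by fastforce
  ultimately show ?thesis
    using that mono by blast
qed

lemma spreading_select_blocks:
  fixes gr :: "nat \<Rightarrow> nat"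
  assumes her: "hereditary G" and spr: "spreading G"
    and adm: "admissible M Es" and admU: "admissible M' Us"
    and L: "\<forall>i<length Es. L i < length Us \<and> Es!i \<subseteq> Us!(L i)" and L_mono: "mono_on {..<length Es} L"
    and sel: "\<forall>J \<subseteq> {..<length Us}. strict_mono_on J gr \<longrightarrow> (\<lambda>l. Min (Us!l)) ` J \<in> G"
    and I: "I \<subseteq> {..<length Es}" "strict_mono_on I (gr \<circ> L)"
  shows "(\<lambda>i. Min (Es!i)) ` I \<in> G"
proof -
  have L_less: "L i < L i'" if "i \<in> I" "i' \<in> I" "i < i'" for i i'
  proof -
    have "L i \<le> L i'"
      using mono_onD[OF L_mono] I that by auto
    moreover have "L i \<noteq> L i'"
      using strict_mono_onD[OF I(2) that] by auto
    ultimately show ?thesis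
      by simp
  qed
  have "strict_mono_on (L ` I) gr"
  proof (rule strict_mono_onI)
    fix l l' assume "l \<in> L ` I" "l' \<in> L ` I" "l < l'"
    then obtain i i' where i: "i \<in> I" "i' \<in> I" "l = L i" "l' = L i'" "L i < L i'"
      by auto
    then have "i < i'"
      using L_less[of i' i] by (metis linorder_neqE_nat order.asym)
    then show "gr l < gr l'"
      using strict_mono_onD[OF I(2)] i by simp
  qed
  then have X: "(\<lambda>l. Min (Us!l)) ` L ` I \<in> G"
    using sel L I by blast
  show ?thesis
  proof (rule spreading_image[OF her spr X])
    show "finite I"
      using I finite_subset by blast
    show "strict_mono_on I (\<lambda>i. Min (Us!(L i)))"
      using admissible_Min_less_Min[OF admU] L_less L I by (auto intro!: strict_mono_onI)
    show "(\<lambda>i. Min (Us!(L i))) ` I \<subseteq> (\<lambda>l. Min (Us!l)) ` L ` I"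
      by auto
    show "strict_mono_on I (\<lambda>i. Min (Es!i))"
      using admissible_Min_less_Min[OF adm] I by (auto intro!: strict_mono_onI)
    show "\<forall>i\<in>I. Min (Us!(L i)) \<le> Min (Es!i)"
      using L admissible_nth[OF adm] admissible_nth[OF admU] I by (auto intro!: Min_antimono)
  qed
qed

context tsirelson_norm
begin

lemma tnorm_admissible_subfamily:
  assumes n: "n \<ge> 1" and adm: "admissible M Es" and S: "S \<subseteq> {..<length Es}"
    and mins: "(\<lambda>i. Min (Es!i)) ` S \<in> Fs n" and U: "\<forall>i\<in>S. Es!i \<subseteq> U" and fx: "finite (supp x)"
  shows "\<theta> n * (\<Sum>i\<in>S. tsnorm (restr (Es!i) x)) \<le> tsnorm (restr U x)"
proof -
  define R where "R i = (if i \<in> S then Es!i else {})" for i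
  have "\<theta> n * (\<Sum>i<length Es. tsnorm (restr (R i) (restr U x))) \<le> tsnorm (restr U x)"
  proof (rule tnorm_family[OF n finite_supp_restr[OF fx]])
    show "\<forall>i<length Es. finite (R i)"
      using admissible_nth[OF adm] by (simp add: R_def)
    show "\<forall>i i'. i < i' \<longrightarrow> i' < length Es \<longrightarrow> R i \<noteq> {} \<longrightarrow> R i' \<noteq> {} \<longrightarrow> Max (R i) < Min (R i')"
      using admissible_Max_less_Min[OF adm] by (simp add: R_def)
    have "{Min (R i) | i. i < length Es \<and> R i \<noteq> {}} = (\<lambda>i. Min (Es!i)) ` S"
      using S admissible_nth[OF adm] unfolding R_def by force
    then show "{Min (R i) | i. i < length Es \<and> R i \<noteq> {}} \<in> Fs n"
      using mins by simp
  qed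
  moreover have "restr (Es!i) (restr U x) = restr (Es!i) x" if "i \<in> S" for i
    using U that by (force simp: restr_def)
  then have "(\<Sum>i<length Es. tsnorm (restr (R i) (restr U x))) = (\<Sum>i\<in>S. tsnorm (restr (Es!i) x))"
    by (intro sum.mono_neutral_cong_right) (use S in \<open>auto simp: R_def restr_empty tnorm_zero\<close>)
  ultimately show ?thesis
    by simp
qed

text \<open>The structure of a \<open>[G, F\<^sub>n\<^sub>1, \<dots>, F\<^sub>n\<^sub>s]\<close>-admissible sequence \<open>Es\<close>: \<open>gr i\<close> is
  the group of \<open>Es!i\<close>, and \<open>c\<close> will be \<open>\<theta>\<^sub>n\<^sub>1 \<cdots> \<theta>\<^sub>n\<^sub>s\<close>.\<close>

definition grouping :: "nat set set \<Rightarrow> real \<Rightarrow> nat set list \<Rightarrow> (nat \<Rightarrow> nat) \<Rightarrow> bool" where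
  "grouping G c Es gr \<longleftrightarrow> mono_on {..<length Es} gr \<and>
     (\<forall>I \<subseteq> {..<length Es}. strict_mono_on I gr \<longrightarrow> (\<lambda>i. Min (Es!i)) ` I \<in> G) \<and>
     (\<forall>\<gamma> x. finite (supp x) \<longrightarrow>
        c * (\<Sum>i\<in>{i. i < length Es \<and> gr i = \<gamma>}. tsnorm (restr (Es!i) x)) \<le> tsnorm x)"

lemma grouping_id:
  assumes "hereditary G" "admissible G Es"
  shows "grouping G 1 Es id"
  unfolding grouping_def
proof (intro conjI allI impI)
  fix I assume "I \<subseteq> {..<length Es}"
  then have "(\<lambda>i. Min (Es!i)) ` I \<subseteq> Min ` set Es"
    by auto
  then show "(\<lambda>i. Min (Es!i)) ` I \<in> G"
    using assms unfolding admissible_def hereditary_def by blast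
next
  fix \<gamma> x assume fx: "finite (supp x)"
  have "{i. i < length Es \<and> id i = \<gamma>} = (if \<gamma> < length Es then {\<gamma>} else {})"
    by auto
  then show "1 * (\<Sum>i\<in>{i. i < length Es \<and> id i = \<gamma>}. tsnorm (restr (Es!i) x)) \<le> tsnorm x"
    by (simp add: tnorm_nonneg[OF fx] tnorm_restr_le[OF fx])
qed (simp add: monotone_on_def)

lemma theta_sum_blocks_le:
  assumes n: "n \<ge> 1" and adm: "admissible M Es"
    and L: "\<forall>i<length Es. L i < length Us \<and> Es!i \<subseteq> Us!(L i)"
    and blocks: "\<forall>l<length Us. (\<lambda>i. Min (Es!i)) ` {i. i < length Es \<and> L i = l} \<in> Fs n"
    and fx: "finite (supp x)"
  shows "\<theta> n * (\<Sum>i\<in>{i. i < length Es \<and> gr (L i) = \<gamma>}. tsnorm (restr (Es!i) x))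
    \<le> (\<Sum>l\<in>{l. l < length Us \<and> gr l = \<gamma>}. tsnorm (restr (Us!l) x))"
proof -
  define S where "S = {i. i < length Es \<and> gr (L i) = \<gamma>}"
  define I where "I l = {i. i < length Es \<and> L i = l}" for l
  define T where "T = {l. l < length Us \<and> gr l = \<gamma>}"
  have "(\<Sum>i\<in>S. tsnorm (restr (Es!i) x)) = (\<Sum>l\<in>T. \<Sum>i\<in>{i\<in>S. L i = l}. tsnorm (restr (Es!i) x))"
    by (rule sum.group[symmetric]) (use L in \<open>auto simp: S_def T_def\<close>)
  also have "\<dots> = (\<Sum>l\<in>T. \<Sum>i\<in>I l. tsnorm (restr (Es!i) x))"
    by (intro sum.cong arg_cong[where f="sum _"]) (auto simp: S_def T_def I_def)
  finally have "\<theta> n * (\<Sum>i\<in>S. tsnorm (restr (Es!i) x))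
      = (\<Sum>l\<in>T. \<theta> n * (\<Sum>i\<in>I l. tsnorm (restr (Es!i) x)))"
    by (simp add: sum_distrib_left)
  also have "\<dots> \<le> (\<Sum>l\<in>T. tsnorm (restr (Us!l) x))"
  proof (rule sum_mono)
    fix l assume "l \<in> T"
    then show "\<theta> n * (\<Sum>i\<in>I l. tsnorm (restr (Es!i) x)) \<le> tsnorm (restr (Us!l) x)"
      using tnorm_admissible_subfamily[OF n adm _ _ _ fx, of "I l" "Us!l"] blocks L
      unfolding I_def T_def by auto
  qed
  finally show ?thesis
    unfolding S_def T_def .
qed

lemma grouping_fam_comp:
  assumes her: "hereditary G" and spr: "spreading G" and n: "n \<ge> 1" and c: "0 \<le> c"
    and adm: "admissible (fam_comp B (Fs n)) Es"
    and IH: "\<And>Us. admissible B Us \<Longrightarrow> \<exists>gr. grouping G c Us gr"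
  shows "\<exists>gr. grouping G (c * \<theta> n) Es gr"
proof -
  obtain Us L where admU: "admissible B Us"
    and L: "\<forall>i<length Es. L i < length Us \<and> Es!i \<subseteq> Us!(L i)"
    and blocks: "\<forall>l<length Us. (\<lambda>i. Min (Es!i)) ` {i. i < length Es \<and> L i = l} \<in> Fs n"
    and L_mono: "mono_on {..<length Es} L"
    by (rule admissible_fam_comp_blocks[OF adm])
  obtain gr where "grouping G c Us gr"
    using IH[OF admU] ..
  then have gr_mono: "mono_on {..<length Us} gr"
    and gr_sel: "\<forall>J \<subseteq> {..<length Us}. strict_mono_on J gr \<longrightarrow> (\<lambda>l. Min (Us!l)) ` J \<in> G"
    and gr_norm: "\<forall>\<gamma> x. finite (supp x) \<longrightarrow>
        c * (\<Sum>l\<in>{l. l < length Us \<and> gr l = \<gamma>}. tsnorm (restr (Us!l) x)) \<le> tsnorm x"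
    unfolding grouping_def by simp_all
  have "mono_on {..<length Es} (gr \<circ> L)"
  proof (rule mono_onI)
    fix i i' assume "i \<in> {..<length Es}" "i' \<in> {..<length Es}" "i \<le> i'"
    then have "L i \<le> L i'" "L i < length Us" "L i' < length Us"
      using mono_onD[OF L_mono] L by auto
    then show "(gr \<circ> L) i \<le> (gr \<circ> L) i'"
      using mono_onD[OF gr_mono] by simp
  qed
  moreover have "c * \<theta> n * (\<Sum>i\<in>{i. i < length Es \<and> gr (L i) = \<gamma>}. tsnorm (restr (Es!i) x)) \<le> tsnorm x"
    if fx: "finite (supp x)" for \<gamma> x
    using order_trans[OF mult_left_mono[OF theta_sum_blocks_le[OF n adm L blocks fx] c]
        gr_norm[rule_format, OF fx]]
    by (simp add: mult.assoc)
  ultimately have "grouping G (c * \<theta> n) Es (gr \<circ> L)"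
    unfolding grouping_def
    using spreading_select_blocks[OF her spr adm admU L L_mono gr_sel] by simp
  then show ?thesis
    by blast
qed

lemma grouping_bracket:
  assumes her: "hereditary G" and spr: "spreading G"
  shows "admissible (fam_bracket G (map Fs ns)) Es \<Longrightarrow> \<forall>n\<in>set ns. n \<ge> 1 \<Longrightarrow>
    \<exists>gr. grouping G (\<Prod>n\<leftarrow>ns. \<theta> n) Es gr"
proof (induction ns arbitrary: Es rule: rev_induct)
  case Nil
  then show ?case
    using grouping_id[OF her] by (auto simp: fam_bracket_def)
next
  case (snoc n ns)
  have "admissible (fam_comp (fam_bracket G (map Fs ns)) (Fs n)) Es"
    using snoc.prems by (simp add: fam_bracket_def)
  moreover have "0 \<le> (\<Prod>n\<leftarrow>ns. \<theta> n)"
    by (rule prod_list_nonneg) (use snoc.prems theta_bounds in \<open>force simp: less_imp_le\<close>)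
  ultimately show ?case
    using grouping_fam_comp[OF her spr _ _ _ snoc.IH] snoc.prems by simp
qed

end

section \<open>Normalized block sequences\<close>

locale mixed_tsirelson_blocks =
  fixes Fs :: "nat \<Rightarrow> nat set set" and \<theta> :: "nat \<Rightarrow> real"
    and \<epsilon> :: real and G :: "nat set set" and m0 :: nat
    and p :: nat and xs :: "nat \<Rightarrow> nat \<Rightarrow> real" and a :: "nat \<Rightarrow> real"
  assumes reg: "\<And>n. regular (Fs n)"
    and S0_sub: "\<And>n. S0 \<subseteq> Fs n"
    and theta_bounds: "\<And>n. n \<ge> 1 \<Longrightarrow> 0 < \<theta> n \<and> \<theta> n < 1"
    and theta_mono: "\<And>n. n \<ge> 1 \<Longrightarrow> \<theta> (Suc n) \<le> \<theta> n"
    and eps: "\<epsilon> > 0"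
    and regG: "regular G"
    and hyp: "\<forall>m\<ge>m0. \<exists>ns. ns \<noteq> [] \<and> (\<forall>n\<in>set ns. n \<ge> 1) \<and>
               \<theta> m < \<epsilon> * (\<Prod>n\<leftarrow>ns. \<theta> n) \<and>
               Fs m \<subseteq> fam_bracket G (map Fs ns)"
    and blocks: "\<forall>k<p. finite (supp (xs k)) \<and> supp (xs k) \<noteq> {} \<and> tnorm (Fs 0) \<theta> Fs (xs k) = 1"
    and succ: "\<forall>k. Suc k < p \<longrightarrow> Max (supp (xs k)) < Min (supp (xs (Suc k)))"
begin

lemma empty_mem: "{} \<in> Fs n"
  using S0_sub[of n] by (auto simp: S0_def)

lemma hereditary_Fs: "hereditary (Fs n)" and spreading_Fs: "spreading (Fs n)"
  using reg[of n] by (auto simp: regular_def)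

lemma hereditary_G: "hereditary G" and spreading_G: "spreading G"
  using regG by (auto simp: regular_def)

lemma G_nonempty: "G \<noteq> {}"
proof -
  obtain ns where "Fs m0 \<subseteq> foldl fam_comp G (map Fs ns)"
    using hyp by (auto simp: fam_bracket_def)
  then have "foldl fam_comp G (map Fs ns) \<noteq> {}"
    using empty_mem[of m0] by auto
  then show ?thesis
  proof (induction ns arbitrary: G)
    case (Cons n ns)
    then show ?case
      unfolding fam_comp_def admissible_def by fastforce
  qed simp
qed

sublocale X: tsirelson_norm "Fs 0" \<theta> Fs
  by unfold_locales (use theta_bounds empty_mem in auto)

sublocale TG: tsirelson_norm G \<theta> Fs
  by unfold_locales (use theta_bounds empty_mem G_nonempty in auto)

lemma theta_antimono:
  assumes "1 \<le> n" "n \<le> n'"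
  shows "\<theta> n' \<le> \<theta> n"
  using assms(2)
proof (induction n' rule: dec_induct)
  case (step k)
  then show ?case
    using theta_mono[of k] assms(1) by linarith
qed simp

text \<open>In the notation of the statement, \<open>imax k\<close> is \<open>i\<^sub>k\<close> and \<open>basis_sum {..<p}\<close> is
  \<open>\<Sum> a\<^sub>k e_(i\<^sub>k)\<close>. The estimate is proved for all vectors \<open>restricted_sum T B\<close>, in which each block
  \<open>x\<^sub>k\<close> is cut down to a set \<open>T k\<close>, since restricting such a vector to a set gives another one.\<close>

definition imax :: "nat \<Rightarrow> nat" where
  "imax k = Max (supp (xs k))"

definition restricted_sum :: "(nat \<Rightarrow> nat set) \<Rightarrow> nat set \<Rightarrow> nat \<Rightarrow> real" where
  "restricted_sum T B = (\<lambda>q. \<Sum>k\<in>B. a k * restr (T k) (xs k) q)"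

definition basis_sum :: "nat set \<Rightarrow> nat \<Rightarrow> real" where
  "basis_sum B = (\<lambda>q. \<Sum>k\<in>B. a k * unitvec (imax k) q)"

definition meets :: "nat set \<Rightarrow> (nat \<Rightarrow> nat set) \<Rightarrow> nat \<Rightarrow> bool" where
  "meets E T k \<longleftrightarrow> E \<inter> T k \<inter> supp (xs k) \<noteq> {}"

lemma finite_supp_x: "k < p \<Longrightarrow> finite (supp (xs k))"
  and supp_x_nonempty: "k < p \<Longrightarrow> supp (xs k) \<noteq> {}"
  and tnorm_x: "k < p \<Longrightarrow> X.tsnorm (xs k) = 1"
  using blocks by auto

lemma supp_x_less:
  assumes "k < k'" "k' < p" "q \<in> supp (xs k)" "q' \<in> supp (xs k')"
  shows "q < q'"
proof -
  have "Max (supp (xs k)) < Min (supp (xs k'))"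
    using assms(1,2)
  proof (induction k' rule: less_induct)
    case (less k')
    then obtain k0 where k0: "k' = Suc k0"
      by (cases k') auto
    have step: "Max (supp (xs k0)) < Min (supp (xs k'))"
      using succ less k0 by auto
    show ?case
    proof (cases "k = k0")
      case False
      then have "Max (supp (xs k)) < Min (supp (xs k0))"
        using less k0 by auto
      moreover have "Min (supp (xs k0)) \<le> Max (supp (xs k0))"
        using finite_supp_x supp_x_nonempty less k0 by (intro Min_le_Max) auto
      ultimately show ?thesis
        using step by linarith
    qed (use step in simp)
  qed
  moreover have "q \<le> Max (supp (xs k))" "Min (supp (xs k')) \<le> q'"
    using assms finite_supp_x[of k] finite_supp_x[of k'] by simp_all
  ultimately show ?thesis
    by linarith
qed

lemma le_imax: "k < p \<Longrightarrow> q \<in> supp (xs k) \<Longrightarrow> q \<le> imax k"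
  unfolding imax_def using finite_supp_x by simp

lemma imax_mem: "k < p \<Longrightarrow> imax k \<in> supp (xs k)"
  unfolding imax_def using finite_supp_x supp_x_nonempty by simp

lemma imax_less: "k < k' \<Longrightarrow> k' < p \<Longrightarrow> imax k < imax k'"
  using supp_x_less imax_mem by (meson order_less_trans)

lemma strict_mono_on_imax: "B \<subseteq> {..<p} \<Longrightarrow> strict_mono_on B imax"
  using imax_less by (auto intro!: strict_mono_onI)

lemma finite_subset_blocks: "B \<subseteq> {..<p} \<Longrightarrow> finite B"
  using finite_subset by blast

lemma basis_sum_imax:
  assumes "B \<subseteq> {..<p}" "k \<in> B"
  shows "basis_sum B (imax k) = a k"
proof -
  have "basis_sum B (imax k) = (\<Sum>k'\<in>B. if k' = k then a k else 0)"
    unfolding basis_sum_def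
    using strict_mono_on_imp_inj_on[OF strict_mono_on_imax[OF assms(1)]] assms(2)
    by (intro sum.cong) (auto simp: unitvec_def dest: inj_onD)
  also have "\<dots> = a k"
    using assms finite_subset_blocks[OF assms(1)] by simp
  finally show ?thesis .
qed

lemma basis_sum_outside: "q \<notin> imax ` B \<Longrightarrow> basis_sum B q = 0"
  unfolding basis_sum_def by (rule sum.neutral) (auto simp: unitvec_def)

lemma finite_supp_basis_sum: "B \<subseteq> {..<p} \<Longrightarrow> finite (supp (basis_sum B))"
  by (rule finite_subset[of _ "imax ` B"])
    (use basis_sum_outside finite_subset_blocks in \<open>auto simp: supp_def\<close>)

lemma restr_basis_sum:
  assumes "B' \<subseteq> B" "B \<subseteq> {..<p}"
  shows "restr (imax ` B') (basis_sum B) = basis_sum B'"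
proof
  fix q
  show "restr (imax ` B') (basis_sum B) q = basis_sum B' q"
  proof (cases "q \<in> imax ` B'")
    case True
    then obtain k where "k \<in> B'" "q = imax k"
      by auto
    then show ?thesis
      using basis_sum_imax[OF assms(2)] basis_sum_imax[of B' k] assms by (auto simp: restr_def)
  qed (simp add: basis_sum_outside restr_def)
qed

lemma sum_abs_basis_sum:
  assumes "A \<subseteq> B" "B \<subseteq> {..<p}"
  shows "(\<Sum>q\<in>imax ` A. \<bar>basis_sum B q\<bar>) = (\<Sum>k\<in>A. \<bar>a k\<bar>)"
proof -
  have "inj_on imax A"
    using strict_mono_on_imp_inj_on strict_mono_on_imax assms by blast
  then have "(\<Sum>q\<in>imax ` A. \<bar>basis_sum B q\<bar>) = (\<Sum>k\<in>A. \<bar>basis_sum B (imax k)\<bar>)"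
    by (simp add: sum.reindex)
  also have "\<dots> = (\<Sum>k\<in>A. \<bar>a k\<bar>)"
    using basis_sum_imax assms by (intro sum.cong) auto
  finally show ?thesis .
qed

lemma finite_supp_restricted_sum: "B \<subseteq> {..<p} \<Longrightarrow> finite (supp (restricted_sum T B))"
  unfolding restricted_sum_def
  by (rule finite_supp_sum) (auto intro: finite_supp_restr finite_supp_x finite_subset_blocks)

lemma finite_supp_restr_x: "k < p \<Longrightarrow> finite (supp (restr E (xs k)))"
  using finite_supp_x finite_supp_restr by blast

lemma tnorm_restr_x_le: "k < p \<Longrightarrow> X.tsnorm (restr E (xs k)) \<le> 1"
  using X.tnorm_restr_le[OF finite_supp_x] tnorm_x by metis

lemma titer_restr_x_le: "k < p \<Longrightarrow> X.iterate j (restr E (xs k)) \<le> 1"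
  using X.titer_le_tnorm[OF finite_supp_restr_x] tnorm_restr_x_le order_trans by blast

lemma titer_restricted_sum_le:
  assumes "B \<subseteq> {..<p}"
  shows "X.iterate j (restricted_sum T B) \<le> (\<Sum>k\<in>B. \<bar>a k\<bar>)"
proof -
  have "X.iterate j (restricted_sum T B) \<le> (\<Sum>k\<in>B. \<bar>a k\<bar> * X.iterate j (restr (T k) (xs k)))"
    unfolding restricted_sum_def
    by (rule X.titer_sum_le) (use assms finite_subset_blocks finite_supp_restr_x in auto)
  also have "\<dots> \<le> (\<Sum>k\<in>B. \<bar>a k\<bar>)"
    using titer_restr_x_le X.titer_bounds[OF finite_supp_restr_x] assms
    by (intro sum_mono mult_right_le_one_le) auto
  finally show ?thesis .
qed

lemma imax_image_mem:
  assumes "hereditary M" "spreading M" "F \<in> M" "B \<subseteq> {..<p}"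
    and "strict_mono_on B h" "h ` B \<subseteq> F" "\<forall>k\<in>B. h k \<le> imax k"
  shows "imax ` B \<in> M"
  by (rule spreading_image[OF assms(1-3) finite_subset_blocks[OF assms(4)] assms(5,6)
        strict_mono_on_imax[OF assms(4)] assms(7)])

lemma meets_order:
  assumes adm: "admissible M Es" and i: "i < length Es" and i': "i' < length Es"
    and k: "k < k'" "k' < p" and meets: "meets (Es!i) T k" "meets (Es!i') T' k'"
  shows "i \<le> i'"
proof (rule ccontr)
  assume "\<not> i \<le> i'"
  then have "Max (Es!i') < Min (Es!i)"
    using admissible_Max_less_Min[OF adm _ i] by simp
  moreover obtain q q' where q: "q \<in> Es!i" "q \<in> supp (xs k)" and q': "q' \<in> Es!i'" "q' \<in> supp (xs k')"
    using meets by (auto simp: meets_def)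
  moreover have "q < q'"
    using supp_x_less[OF k q(2) q'(2)] .
  moreover have "Min (Es!i) \<le> q" "q' \<le> Max (Es!i')"
    using admissible_nth[OF adm i] admissible_nth[OF adm i'] q q' by simp_all
  ultimately show False
    by linarith
qed

lemma Min_le_imax:
  assumes "meets E T k" "k < p" "finite E"
  shows "Min E \<le> imax k"
proof -
  obtain q where "q \<in> E" "q \<in> supp (xs k)"
    using assms(1) by (auto simp: meets_def)
  then show ?thesis
    using le_imax[OF assms(2)] assms(3) by (meson Min_le order_trans)
qed

lemma restr_not_meets: "\<not> meets E T k \<Longrightarrow> restr E (restr (T k) (xs k)) = (\<lambda>_. 0)"
  unfolding meets_def restr_def supp_def by (rule ext) (simp, blast)

lemma imax_meets_mem:
  assumes "hereditary M" "spreading M" and F: "F \<in> M" and B: "B \<subseteq> {..<p}"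
    and meets: "\<forall>k\<in>B. meets F T k"
  shows "imax ` B \<in> M"
proof -
  define h where "h k = Min (F \<inter> T k \<inter> supp (xs k))" for k
  have h: "h k \<in> F \<inter> supp (xs k)" if "k \<in> B" for k
  proof -
    have "finite (F \<inter> T k \<inter> supp (xs k))"
      using that B finite_supp_x by auto
    then show ?thesis
      unfolding h_def using that meets by (auto simp: meets_def dest!: Min_in)
  qed
  show ?thesis
  proof (rule imax_image_mem[OF assms(1-3) B])
    show "strict_mono_on B h"
    proof (rule strict_mono_onI)
      fix k k' assume k: "k \<in> B" "k' \<in> B" "k < k'"
      then have "h k \<in> supp (xs k)" "h k' \<in> supp (xs k')" "k' < p"
        using h B by auto
      then show "h k < h k'"
        using supp_x_less k(3) by blast
    qed
    show "h ` B \<subseteq> F" "\<forall>k\<in>B. h k \<le> imax k"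
      using h le_imax B by auto
  qed
qed

lemma hnorm_restricted_sum_le:
  assumes B: "B \<subseteq> {..<p}"
  shows "hnorm (Fs 0) (restricted_sum T B) \<le> hnorm (Fs 0) (basis_sum B)"
  unfolding hnorm_def[of "Fs 0" "restricted_sum T B"]
proof (rule cSUP_least)
  fix F assume F: "F \<in> Fs 0"
  define B' where "B' = {k\<in>B. meets F T k}"
  have B': "B' \<subseteq> {..<p}"
    using B by (auto simp: B'_def)
  have "(\<Sum>q\<in>F. \<bar>restricted_sum T B q\<bar>) \<le> (\<Sum>q\<in>F. \<Sum>k\<in>B. \<bar>a k\<bar> * \<bar>restr (T k) (xs k) q\<bar>)"
  proof (rule sum_mono)
    fix q
    have "\<bar>restricted_sum T B q\<bar> \<le> (\<Sum>k\<in>B. \<bar>a k * restr (T k) (xs k) q\<bar>)"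
      unfolding restricted_sum_def by (rule sum_abs)
    then show "\<bar>restricted_sum T B q\<bar> \<le> (\<Sum>k\<in>B. \<bar>a k\<bar> * \<bar>restr (T k) (xs k) q\<bar>)"
      by (simp add: abs_mult)
  qed
  also have "\<dots> = (\<Sum>k\<in>B. \<bar>a k\<bar> * (\<Sum>q\<in>F. \<bar>restr (T k) (xs k) q\<bar>))"
    unfolding sum_distrib_left by (rule sum.swap)
  also have "\<dots> = (\<Sum>k\<in>B'. \<bar>a k\<bar> * (\<Sum>q\<in>F. \<bar>restr (T k) (xs k) q\<bar>))"
  proof (rule sum.mono_neutral_right)
    show "\<forall>k\<in>B - B'. \<bar>a k\<bar> * (\<Sum>q\<in>F. \<bar>restr (T k) (xs k) q\<bar>) = 0"
      unfolding B'_def meets_def restr_def supp_def by (auto intro!: sum.neutral split: if_splits)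
  qed (auto simp: finite_subset_blocks[OF B] B'_def)
  also have "\<dots> \<le> (\<Sum>k\<in>B'. \<bar>a k\<bar>)"
  proof (intro sum_mono mult_right_le_one_le)
    fix k assume "k \<in> B'"
    then have k: "k < p"
      using B' by auto
    have "(\<Sum>q\<in>F. \<bar>restr (T k) (xs k) q\<bar>) \<le> hnorm (Fs 0) (restr (T k) (xs k))"
      by (rule hnorm_upper[OF finite_supp_restr_x[OF k] F])
    also have "\<dots> \<le> 1"
      using X.hnorm_le_tnorm[OF finite_supp_restr_x[OF k], of "T k"] tnorm_restr_x_le[OF k, of "T k"]
      by linarith
    finally show "(\<Sum>q\<in>F. \<bar>restr (T k) (xs k) q\<bar>) \<le> 1" .
  qed (simp_all add: sum_nonneg)
  also have "\<dots> = (\<Sum>q\<in>imax ` B'. \<bar>basis_sum B q\<bar>)"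
    using sum_abs_basis_sum[of B' B] B by (simp add: B'_def)
  also have "\<dots> \<le> hnorm (Fs 0) (basis_sum B)"
    by (rule hnorm_upper[OF finite_supp_basis_sum[OF B] imax_meets_mem[OF hereditary_Fs spreading_Fs F B', where T=T]])
      (simp add: B'_def)
  finally show "(\<Sum>q\<in>F. \<bar>restricted_sum T B q\<bar>) \<le> hnorm (Fs 0) (basis_sum B)" .
qed (use empty_mem in auto)

lemma Min_imax_blocks_mem:
  assumes adm: "admissible (Fs n) Es" and B: "B \<subseteq> {..<p}"
    and C: "\<forall>i<length Es. C i \<subseteq> B"
    and sep: "\<forall>i i'. i < i' \<longrightarrow> i' < length Es \<longrightarrow> (\<forall>k\<in>C i. \<forall>k'\<in>C i'. k < k')"
    and lo: "\<forall>i<length Es. \<forall>k\<in>C i. Min (Es!i) \<le> imax k"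
  shows "(\<lambda>i. Min (imax ` C i)) ` {i. i < length Es \<and> C i \<noteq> {}} \<in> Fs n"
proof -
  define I where "I = {i. i < length Es \<and> C i \<noteq> {}}"
  have finC: "finite (C i)" if "i < length Es" for i
    using C B that finite_subset_blocks by blast
  have "\<exists>k. k \<in> C i \<and> Min (imax ` C i) = imax k" if "i \<in> I" for i
  proof -
    have "Min (imax ` C i) \<in> imax ` C i"
      using finC that unfolding I_def by simp
    then show ?thesis
      by auto
  qed
  then obtain k where k: "k i \<in> C i" "Min (imax ` C i) = imax (k i)" if "i \<in> I" for i
    by metis
  show ?thesis
    unfolding I_def[symmetric]
  proof (rule spreading_image[OF hereditary_Fs spreading_Fs])
    show "Min ` set Es \<in> Fs n"
      using adm unfolding admissible_def by simp
    show "finite I" "(\<lambda>i. Min (Es!i)) ` I \<subseteq> Min ` set Es"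
      unfolding I_def by auto
    show "strict_mono_on I (\<lambda>i. Min (Es!i))"
      using admissible_Min_less_Min[OF adm] unfolding I_def by (auto intro!: strict_mono_onI)
    show "strict_mono_on I (\<lambda>i. Min (imax ` C i))"
    proof (rule strict_mono_onI)
      fix i i' assume i: "i \<in> I" "i' \<in> I" "i < i'"
      then have "k i < k i'" "k i' < p"
        using k sep C B unfolding I_def by blast+
      then show "Min (imax ` C i) < Min (imax ` C i')"
        using k i imax_less by simp
    qed
    show "\<forall>i\<in>I. Min (Es!i) \<le> Min (imax ` C i)"
      using k lo unfolding I_def by auto
  qed
qed

lemma tnorm_basis_sum_family:
  assumes "tsirelson_norm H \<theta> Fs"
    and n: "n \<ge> 1" and adm: "admissible (Fs n) Es" and B: "B \<subseteq> {..<p}"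
    and C: "\<forall>i<length Es. C i \<subseteq> B"
    and sep: "\<forall>i i'. i < i' \<longrightarrow> i' < length Es \<longrightarrow> (\<forall>k\<in>C i. \<forall>k'\<in>C i'. k < k')"
    and lo: "\<forall>i<length Es. \<forall>k\<in>C i. Min (Es!i) \<le> imax k"
  shows "\<theta> n * (\<Sum>i<length Es. tnorm H \<theta> Fs (basis_sum (C i))) \<le> tnorm H \<theta> Fs (basis_sum B)"
proof -
  interpret H: tsirelson_norm H \<theta> Fs
    by (rule assms(1))
  define m where "m = length Es"
  define R where "R i = imax ` C i" for i
  have finC: "finite (C i)" if "i < m" for i
    using C B that m_def finite_subset_blocks by blast
  have "\<theta> n * (\<Sum>i<m. H.tsnorm (restr (R i) (basis_sum B))) \<le> H.tsnorm (basis_sum B)"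
  proof (rule H.tnorm_family[OF n finite_supp_basis_sum[OF B]])
    show "\<forall>i<m. finite (R i)"
      using finC by (auto simp: R_def)
    show "\<forall>i i'. i < i' \<longrightarrow> i' < m \<longrightarrow> R i \<noteq> {} \<longrightarrow> R i' \<noteq> {} \<longrightarrow> Max (R i) < Min (R i')"
    proof (intro allI impI)
      fix i i' assume i: "i < i'" "i' < m" "R i \<noteq> {}" "R i' \<noteq> {}"
      then have "Max (R i) \<in> imax ` C i" "Min (R i') \<in> imax ` C i'"
        using finC unfolding R_def by simp_all
      then obtain k k' where "k \<in> C i" "Max (R i) = imax k" "k' \<in> C i'" "Min (R i') = imax k'"
        by auto
      moreover have "k < k'" "k' < p"
        using sep C B i calculation unfolding m_def by blast+
      ultimately show "Max (R i) < Min (R i')"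
        using imax_less by simp
    qed
    have "{Min (R i) |i. i < m \<and> R i \<noteq> {}} = (\<lambda>i. Min (imax ` C i)) ` {i. i < length Es \<and> C i \<noteq> {}}"
      unfolding R_def m_def by auto
    then show "{Min (R i) |i. i < m \<and> R i \<noteq> {}} \<in> Fs n"
      using Min_imax_blocks_mem[OF adm B C sep lo] by simp
  qed
  moreover have "restr (R i) (basis_sum B) = basis_sum (C i)" if "i < m" for i
    unfolding R_def by (rule restr_basis_sum) (use C B that m_def in auto)
  ultimately show ?thesis
    using m_def by simp
qed

lemma theta_sum_abs_le_tnorm:
  assumes n: "n \<ge> 1" and A: "A \<subseteq> {..<p}" and AF: "imax ` A \<in> Fs n"
  shows "\<theta> n * (\<Sum>k\<in>A. \<bar>a k\<bar>) \<le> X.tsnorm (basis_sum A)"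
proof -
  define R where "R k = (if k \<in> A then {imax k} else {})" for k
  have fam: "\<theta> n * (\<Sum>k<p. X.tsnorm (restr (R k) (basis_sum A))) \<le> X.tsnorm (basis_sum A)"
  proof (rule X.tnorm_family[OF n finite_supp_basis_sum[OF A]])
    show "\<forall>i<p. finite (R i)"
      by (simp add: R_def)
    show "\<forall>i i'. i < i' \<longrightarrow> i' < p \<longrightarrow> R i \<noteq> {} \<longrightarrow> R i' \<noteq> {} \<longrightarrow> Max (R i) < Min (R i')"
      using imax_less by (auto simp: R_def)
    have "{Min (R i) |i. i < p \<and> R i \<noteq> {}} = imax ` A"
      using A by (auto simp: R_def)
    then show "{Min (R i) |i. i < p \<and> R i \<noteq> {}} \<in> Fs n"
      using AF by simp
  qed
  have "\<bar>a k\<bar> \<le> X.tsnorm (restr (R k) (basis_sum A))" if k: "k \<in> A" for k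
  proof -
    have fin: "finite (supp (restr {imax k} (basis_sum A)))"
      by (intro finite_supp_restr finite_supp_basis_sum A)
    have "{imax k} \<in> Fs 0"
      using S0_sub[of 0] by (auto simp: S0_def)
    then have "(\<Sum>q\<in>{imax k}. \<bar>restr {imax k} (basis_sum A) q\<bar>) \<le> hnorm (Fs 0) (restr {imax k} (basis_sum A))"
      by (rule hnorm_upper[OF fin])
    also have "\<dots> \<le> X.tsnorm (restr {imax k} (basis_sum A))"
      by (rule X.hnorm_le_tnorm[OF fin])
    finally show ?thesis
      using basis_sum_imax[OF A k] k by (simp add: R_def restr_def)
  qed
  then have "(\<Sum>k\<in>A. \<bar>a k\<bar>) \<le> (\<Sum>k\<in>A. X.tsnorm (restr (R k) (basis_sum A)))"
    by (rule sum_mono)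
  also have "\<dots> = (\<Sum>k<p. X.tsnorm (restr (R k) (basis_sum A)))"
    by (rule sum.mono_neutral_left) (use A in \<open>auto simp: R_def restr_empty X.tnorm_zero\<close>)
  finally have "(\<Sum>k\<in>A. \<bar>a k\<bar>) \<le> (\<Sum>k<p. X.tsnorm (restr (R k) (basis_sum A)))" .
  then have "\<theta> n * (\<Sum>k\<in>A. \<bar>a k\<bar>) \<le> \<theta> n * (\<Sum>k<p. X.tsnorm (restr (R k) (basis_sum A)))"
    using theta_bounds[OF n] by (intro mult_left_mono) auto
  with fam show ?thesis
    by linarith
qed

lemma sum_abs_le_tnorm_G:
  assumes "A \<subseteq> B" "B \<subseteq> {..<p}" "imax ` A \<in> G"
  shows "(\<Sum>k\<in>A. \<bar>a k\<bar>) \<le> TG.tsnorm (basis_sum B)"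
proof -
  have "(\<Sum>k\<in>A. \<bar>a k\<bar>) \<le> hnorm G (basis_sum B)"
    using sum_abs_basis_sum[OF assms(1,2)] hnorm_upper[OF finite_supp_basis_sum[OF assms(2)] assms(3)]
    by simp
  then show ?thesis
    using TG.hnorm_le_tnorm[OF finite_supp_basis_sum[OF assms(2)]] by linarith
qed

section \<open>Splitting a node of the norm\<close>

definition single_meets :: "nat set list \<Rightarrow> (nat \<Rightarrow> nat set) \<Rightarrow> nat set \<Rightarrow> nat \<Rightarrow> nat set" where
  "single_meets Es T B i =
     {k\<in>B. meets (Es!i) T k \<and> (\<forall>i'<length Es. meets (Es!i') T k \<longrightarrow> i' = i)}"

definition multi_meets :: "nat set list \<Rightarrow> (nat \<Rightarrow> nat set) \<Rightarrow> nat set \<Rightarrow> nat set" where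
  "multi_meets Es T B =
     {k\<in>B. \<exists>i<length Es. \<exists>i'<length Es. i \<noteq> i' \<and> meets (Es!i) T k \<and> meets (Es!i') T k}"

definition first_meet :: "nat set list \<Rightarrow> (nat \<Rightarrow> nat set) \<Rightarrow> nat \<Rightarrow> nat" where
  "first_meet Es T k = (LEAST i. i < length Es \<and> meets (Es!i) T k)"

lemma single_meets_subset: "single_meets Es T B i \<subseteq> B"
  and multi_meets_subset: "multi_meets Es T B \<subseteq> B"
  by (auto simp: single_meets_def multi_meets_def)

lemma single_meets_disjoint:
  "i < length Es \<Longrightarrow> single_meets Es T B i \<inter> multi_meets Es T B = {}"
  "i < length Es \<Longrightarrow> i' < length Es \<Longrightarrow> i \<noteq> i' \<Longrightarrow> single_meets Es T B i \<inter> single_meets Es T B i' = {}"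
  by (auto simp: single_meets_def multi_meets_def)

lemma restr_restricted_sum:
  assumes i: "i < length Es" and B: "B \<subseteq> {..<p}"
  shows "restr (Es!i) (restricted_sum T B) = (\<lambda>q. restricted_sum (\<lambda>k. Es!i \<inter> T k) (single_meets Es T B i) q
     + (\<Sum>k\<in>multi_meets Es T B. a k * restr (Es!i) (restr (T k) (xs k)) q))"
proof
  fix q
  define f where "f k = a k * restr (Es!i \<inter> T k) (xs k) q" for k
  let ?C = "single_meets Es T B i" and ?A = "multi_meets Es T B"
  have fin: "finite B"
    by (rule finite_subset_blocks[OF B])
  have "restr (Es!i) (restricted_sum T B) q = (\<Sum>k\<in>B. f k)"
    by (simp add: restricted_sum_def restr_def f_def sum.If_cases)
  also have "\<dots> = (\<Sum>k\<in>?C \<union> ?A. f k)"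
  proof (rule sum.mono_neutral_right[OF fin])
    show "?C \<union> ?A \<subseteq> B"
      using single_meets_subset multi_meets_subset by blast
    show "\<forall>k\<in>B - (?C \<union> ?A). f k = 0"
    proof
      fix k assume "k \<in> B - (?C \<union> ?A)"
      then have "\<not> meets (Es!i) T k"
        using i by (auto simp: single_meets_def multi_meets_def)
      then show "f k = 0"
        by (auto simp: f_def meets_def restr_def supp_def)
    qed
  qed
  also have "\<dots> = (\<Sum>k\<in>?C. f k) + (\<Sum>k\<in>?A. f k)"
    using single_meets_disjoint(1)[OF i] finite_subset[OF single_meets_subset fin]
      finite_subset[OF multi_meets_subset fin]
    by (intro sum.union_disjoint)
  also have "\<dots> = restricted_sum (\<lambda>k. Es!i \<inter> T k) ?C q
     + (\<Sum>k\<in>?A. a k * restr (Es!i) (restr (T k) (xs k)) q)"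
    by (simp add: restricted_sum_def f_def restr_restr)
  finally show "restr (Es!i) (restricted_sum T B) q = restricted_sum (\<lambda>k. Es!i \<inter> T k) ?C q
     + (\<Sum>k\<in>?A. a k * restr (Es!i) (restr (T k) (xs k)) q)" .
qed

lemma titer_restr_restricted_sum_le:
  assumes i: "i < length Es" and B: "B \<subseteq> {..<p}"
  shows "X.iterate j (restr (Es!i) (restricted_sum T B))
    \<le> X.iterate j (restricted_sum (\<lambda>k. Es!i \<inter> T k) (single_meets Es T B i))
      + (\<Sum>k\<in>multi_meets Es T B. \<bar>a k\<bar> * X.iterate j (restr (Es!i) (restr (T k) (xs k))))"
proof -
  let ?A = "multi_meets Es T B"
  have AB: "?A \<subseteq> {..<p}"
    using multi_meets_subset B by blast
  have A: "finite ?A" "\<forall>k\<in>?A. finite (supp (restr (Es!i) (restr (T k) (xs k))))"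
    using finite_subset_blocks[OF AB] finite_supp_restr[OF finite_supp_restr_x] AB by auto
  have C: "finite (supp (restricted_sum (\<lambda>k. Es!i \<inter> T k) (single_meets Es T B i)))"
    using single_meets_subset B by (intro finite_supp_restricted_sum) blast
  have "X.iterate j (restr (Es!i) (restricted_sum T B))
    \<le> X.iterate j (restricted_sum (\<lambda>k. Es!i \<inter> T k) (single_meets Es T B i))
      + X.iterate j (\<lambda>q. \<Sum>k\<in>?A. a k * restr (Es!i) (restr (T k) (xs k)) q)"
    unfolding restr_restricted_sum[OF i B] by (rule X.titer_add_le[OF C finite_supp_sum[OF A]])
  then show ?thesis
    using X.titer_sum_le[OF A, of j a] by linarith
qed

definition block_term :: "nat \<Rightarrow> nat \<Rightarrow> nat set list \<Rightarrow> (nat \<Rightarrow> nat set) \<Rightarrow> nat \<Rightarrow> real" where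
  "block_term j n Es T k = \<theta> n * (\<Sum>i<length Es. X.iterate j (restr (Es!i) (restr (T k) (xs k))))"

lemma theta_sum_titer_split_le:
  assumes B: "B \<subseteq> {..<p}" and n: "n \<ge> 1"
  shows "\<theta> n * (\<Sum>E\<leftarrow>Es. X.iterate j (restr E (restricted_sum T B)))
    \<le> (\<Sum>i<length Es. \<theta> n * X.iterate j (restricted_sum (\<lambda>k. Es!i \<inter> T k) (single_meets Es T B i)))
      + (\<Sum>k\<in>multi_meets Es T B. \<bar>a k\<bar> * block_term j n Es T k)"
proof -
  define S where "S i = X.iterate j (restricted_sum (\<lambda>k. Es!i \<inter> T k) (single_meets Es T B i))" for i
  define Z where "Z k i = X.iterate j (restr (Es!i) (restr (T k) (xs k)))" for k i
  let ?A = "multi_meets Es T B"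
  have "(\<Sum>E\<leftarrow>Es. X.iterate j (restr E (restricted_sum T B)))
      = (\<Sum>i<length Es. X.iterate j (restr (Es!i) (restricted_sum T B)))"
    by (simp add: sum_list_sum_nth atLeast0LessThan)
  also have "\<dots> \<le> (\<Sum>i<length Es. S i + (\<Sum>k\<in>?A. \<bar>a k\<bar> * Z k i))"
    using titer_restr_restricted_sum_le B unfolding S_def Z_def by (intro sum_mono) auto
  also have "\<dots> = (\<Sum>i<length Es. S i) + (\<Sum>i<length Es. \<Sum>k\<in>?A. \<bar>a k\<bar> * Z k i)"
    by (rule sum.distrib)
  also have "(\<Sum>i<length Es. \<Sum>k\<in>?A. \<bar>a k\<bar> * Z k i) = (\<Sum>k\<in>?A. \<bar>a k\<bar> * (\<Sum>i<length Es. Z k i))"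
    unfolding sum_distrib_left by (rule sum.swap)
  finally have "\<theta> n * (\<Sum>E\<leftarrow>Es. X.iterate j (restr E (restricted_sum T B)))
      \<le> \<theta> n * ((\<Sum>i<length Es. S i) + (\<Sum>k\<in>?A. \<bar>a k\<bar> * (\<Sum>i<length Es. Z k i)))"
    using theta_bounds[OF n] by (intro mult_left_mono) auto
  also have "\<dots> = (\<Sum>i<length Es. \<theta> n * S i) + (\<Sum>k\<in>?A. \<bar>a k\<bar> * (\<theta> n * (\<Sum>i<length Es. Z k i)))"
    by (simp add: distrib_left sum_distrib_left mult.left_commute)
  finally show ?thesis
    unfolding S_def Z_def block_term_def .
qed

lemma block_term_bounds:
  assumes k: "k < p" and n: "n \<ge> 1" and adm: "admissible (Fs n) Es"
  shows "0 \<le> block_term j n Es T k \<and> block_term j n Es T k \<le> 1"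
  unfolding block_term_def
proof
  have "\<theta> n * (\<Sum>E\<leftarrow>Es. X.iterate j (restr E (restr (T k) (xs k)))) \<le> X.iterate (Suc j) (restr (T k) (xs k))"
    by (rule X.titer_Suc_upper[OF n adm finite_supp_restr_x[OF k]])
  also have "\<dots> \<le> 1"
    by (rule titer_restr_x_le[OF k])
  finally show "\<theta> n * (\<Sum>i<length Es. X.iterate j (restr (Es!i) (restr (T k) (xs k)))) \<le> 1"
    by (simp add: sum_list_sum_nth atLeast0LessThan)
  show "0 \<le> \<theta> n * (\<Sum>i<length Es. X.iterate j (restr (Es!i) (restr (T k) (xs k))))"
    using theta_bounds[OF n] X.titer_bounds[OF finite_supp_restr[OF finite_supp_restr_x[OF k]]]
    by (intro mult_nonneg_nonneg sum_nonneg) auto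
qed

lemma single_meets_less:
  assumes adm: "admissible M Es" and B: "B \<subseteq> {..<p}" and i: "i < i'" "i' < length Es"
    and k: "k \<in> single_meets Es T B i" and k': "k' \<in> single_meets Es T B i'"
  shows "k < k'"
proof (rule ccontr)
  assume "\<not> k < k'"
  moreover have "k \<noteq> k'"
    using single_meets_disjoint(2)[of i Es i' T B] i k k' by auto
  ultimately have "k' < k"
    by simp
  moreover have "k < p"
    using k B single_meets_subset by blast
  moreover have "meets (Es!i') T k'" "meets (Es!i) T k"
    using k k' by (simp_all add: single_meets_def)
  ultimately have "i' \<le> i"
    using meets_order[OF adm i(2), of i] i by simp
  then show False
    using i by simp
qed

lemma Min_le_imax_single_meets:
  assumes "admissible M Es" "B \<subseteq> {..<p}" "i < length Es" "k \<in> single_meets Es T B i"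
  shows "Min (Es!i) \<le> imax k"
proof (rule Min_le_imax)
  show "meets (Es!i) T k"
    using assms(4) by (simp add: single_meets_def)
  show "k < p"
    using assms(2,4) single_meets_subset by blast
  show "finite (Es!i)"
    using admissible_nth[OF assms(1,3)] by simp
qed

lemma sum_abs_single_multi_le:
  assumes B: "B \<subseteq> {..<p}" and A: "A \<subseteq> multi_meets Es T B"
  shows "(\<Sum>i<length Es. \<Sum>k\<in>single_meets Es T B i. \<bar>a k\<bar>) + (\<Sum>k\<in>A. \<bar>a k\<bar>) \<le> (\<Sum>k\<in>B. \<bar>a k\<bar>)"
proof -
  have fin: "finite B"
    by (rule finite_subset_blocks[OF B])
  define U where "U = (\<Union>i<length Es. single_meets Es T B i)"
  have "(\<Sum>i<length Es. \<Sum>k\<in>single_meets Es T B i. \<bar>a k\<bar>) = (\<Sum>k\<in>U. \<bar>a k\<bar>)"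
    unfolding U_def using single_meets_disjoint(2) finite_subset[OF single_meets_subset fin]
    by (intro sum.UNION_disjoint[symmetric]) auto
  moreover have "U \<inter> A = {}"
    unfolding U_def using single_meets_disjoint(1)[of _ Es T B] A by blast
  then have "(\<Sum>k\<in>U. \<bar>a k\<bar>) + (\<Sum>k\<in>A. \<bar>a k\<bar>) = (\<Sum>k\<in>U \<union> A. \<bar>a k\<bar>)"
    unfolding U_def using finite_subset[OF single_meets_subset fin]
      finite_subset[OF A finite_subset[OF multi_meets_subset fin]]
    by (intro sum.union_disjoint[symmetric]) auto
  moreover have "(\<Sum>k\<in>U \<union> A. \<bar>a k\<bar>) \<le> (\<Sum>k\<in>B. \<bar>a k\<bar>)"
  proof (rule sum_mono2[OF fin])
    show "U \<union> A \<subseteq> B"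
      unfolding U_def using A single_meets_subset[of Es T B] multi_meets_subset[of Es T B] by blast
  qed simp
  ultimately show ?thesis
    by linarith
qed

lemma first_meetD:
  assumes k: "k \<in> multi_meets Es T B"
  shows "first_meet Es T k < length Es" "meets (Es!first_meet Es T k) T k"
    and "\<And>i. i < length Es \<Longrightarrow> meets (Es!i) T k \<Longrightarrow> first_meet Es T k \<le> i"
    and "\<exists>i'<length Es. first_meet Es T k < i' \<and> meets (Es!i') T k"
proof -
  obtain i i' where ii: "i < length Es" "i' < length Es" "i \<noteq> i'" "meets (Es!i) T k" "meets (Es!i') T k"
    using k by (auto simp: multi_meets_def)
  show "first_meet Es T k < length Es" "meets (Es!first_meet Es T k) T k"
    unfolding first_meet_def using LeastI[of "\<lambda>i. i < length Es \<and> meets (Es!i) T k" i] ii by auto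
  show least: "first_meet Es T k \<le> i" if "i < length Es" "meets (Es!i) T k" for i
    unfolding first_meet_def using that by (auto intro: Least_le)
  show "\<exists>i'<length Es. first_meet Es T k < i' \<and> meets (Es!i') T k"
    using least[of i] least[of i'] ii by (cases "first_meet Es T k = i") force+
qed

lemma first_meet_less:
  assumes adm: "admissible M Es" and B: "B \<subseteq> {..<p}"
    and k: "k \<in> multi_meets Es T B" and k': "k' \<in> multi_meets Es T B" and less: "k < k'"
  shows "first_meet Es T k < first_meet Es T k'"
proof -
  obtain i where i: "i < length Es" "first_meet Es T k < i" "meets (Es!i) T k"
    using first_meetD(4)[OF k] by blast
  have "k' < p"
    using k' B multi_meets_subset by blast
  then have "i \<le> first_meet Es T k'"
    using meets_order[OF adm i(1) first_meetD(1)[OF k'] less _ i(3) first_meetD(2)[OF k']] by simp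
  then show ?thesis
    using i by simp
qed

lemma Min_first_meet_le_imax:
  assumes adm: "admissible M Es" and B: "B \<subseteq> {..<p}" and k: "k \<in> multi_meets Es T B"
  shows "Min (Es!first_meet Es T k) \<le> imax k"
proof (rule Min_le_imax)
  show "meets (Es!first_meet Es T k) T k"
    by (rule first_meetD(2)[OF k])
  show "k < p"
    using k B multi_meets_subset by blast
  show "finite (Es!first_meet Es T k)"
    using admissible_nth[OF adm first_meetD(1)[OF k]] by simp
qed

lemma strict_mono_on_Min_first_meet:
  assumes adm: "admissible M Es" and B: "B \<subseteq> {..<p}" and A: "A \<subseteq> multi_meets Es T B"
  shows "strict_mono_on A (\<lambda>k. Min (Es!first_meet Es T k))"
proof (rule strict_mono_onI)
  fix k k' assume "k \<in> A" "k' \<in> A" "k < k'"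
  then show "Min (Es!first_meet Es T k) < Min (Es!first_meet Es T k')"
    using admissible_Min_less_Min[OF adm first_meet_less[OF adm B] first_meetD(1)] A by blast
qed

text \<open>Distinct blocks meeting two of the \<open>Es!i\<close> first meet distinct \<open>Es!i\<close>, in the same order,
  and \<open>imax k\<close> lies to the right of the minimum of that set.\<close>

lemma imax_multi_meets_mem:
  assumes adm: "admissible (Fs n) Es" and B: "B \<subseteq> {..<p}"
  shows "imax ` multi_meets Es T B \<in> Fs n"
proof (rule imax_image_mem[OF hereditary_Fs spreading_Fs _ _ strict_mono_on_Min_first_meet[OF adm B]])
  show "Min ` set Es \<in> Fs n"
    using adm unfolding admissible_def by simp
  show "multi_meets Es T B \<subseteq> {..<p}"
    using B multi_meets_subset by blast
  show "(\<lambda>k. Min (Es!first_meet Es T k)) ` multi_meets Es T B \<subseteq> Min ` set Es"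
    using first_meetD(1) by auto
  show "\<forall>k\<in>multi_meets Es T B. Min (Es!first_meet Es T k) \<le> imax k"
    using Min_first_meet_le_imax[OF adm B] by blast
qed simp

definition spread_meets :: "nat set list \<Rightarrow> (nat \<Rightarrow> nat set) \<Rightarrow> nat set \<Rightarrow> (nat \<Rightarrow> nat) \<Rightarrow> nat set" where
  "spread_meets Es T B gr = {k\<in>multi_meets Es T B. \<exists>i<length Es. \<exists>i'<length Es.
     meets (Es!i) T k \<and> meets (Es!i') T k \<and> gr i \<noteq> gr i'}"

lemma group_first_meet_less:
  assumes adm: "admissible M Es" and B: "B \<subseteq> {..<p}" and gr: "mono_on {..<length Es} gr"
    and k: "k \<in> spread_meets Es T B gr" and k': "k' \<in> spread_meets Es T B gr" and less: "k < k'"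
  shows "gr (first_meet Es T k) < gr (first_meet Es T k')"
proof -
  have kA: "k \<in> multi_meets Es T B" and k'A: "k' \<in> multi_meets Es T B"
    using k k' by (auto simp: spread_meets_def)
  have gr_le: "gr i \<le> gr i'" if "i \<le> i'" "i' < length Es" for i i'
    using mono_onD[OF gr] that by simp
  obtain i1 i2 where i: "i1 < length Es" "i2 < length Es" "meets (Es!i1) T k" "meets (Es!i2) T k"
    "gr i1 \<noteq> gr i2"
    using k by (auto simp: spread_meets_def)
  have "gr (first_meet Es T k) \<le> gr i1" "gr (first_meet Es T k) \<le> gr i2"
    using first_meetD(3)[OF kA] gr_le i by auto
  then obtain i3 where i3: "i3 < length Es" "meets (Es!i3) T k" "gr (first_meet Es T k) < gr i3"
    using i by (metis le_neq_implies_less)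
  have "k' < p"
    using k'A B multi_meets_subset by blast
  then have "i3 \<le> first_meet Es T k'"
    using meets_order[OF adm i3(1) first_meetD(1)[OF k'A] less _ i3(2) first_meetD(2)[OF k'A]] by simp
  then show ?thesis
    using i3 gr_le first_meetD(1)[OF k'A] by (meson order.strict_trans2)
qed

lemma imax_spread_meets_mem:
  assumes adm: "admissible M Es" and B: "B \<subseteq> {..<p}" and gr: "X.grouping G c Es gr"
  shows "imax ` spread_meets Es T B gr \<in> G"
proof -
  define A where "A = spread_meets Es T B gr"
  have AA: "A \<subseteq> multi_meets Es T B"
    by (auto simp: A_def spread_meets_def)
  have gr_mono: "mono_on {..<length Es} gr"
    and gr_sel: "\<And>I. I \<subseteq> {..<length Es} \<Longrightarrow> strict_mono_on I gr \<Longrightarrow> (\<lambda>i. Min (Es!i)) ` I \<in> G"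
    using gr unfolding X.grouping_def by auto
  define I where "I = first_meet Es T ` A"
  have "strict_mono_on I gr"
  proof (rule strict_mono_onI)
    fix l l' assume "l \<in> I" "l' \<in> I" "l < l'"
    then obtain k k' where kk: "k \<in> A" "k' \<in> A" "l = first_meet Es T k" "l' = first_meet Es T k'"
      by (auto simp: I_def)
    have "k < k'"
    proof (rule ccontr)
      assume "\<not> k < k'"
      then have "k' < k \<or> k' = k"
        by auto
      then show False
        using first_meet_less[OF adm B, of k' T k] kk AA \<open>l < l'\<close> by auto
    qed
    then show "gr l < gr l'"
      using group_first_meet_less[OF adm B gr_mono] kk unfolding A_def by blast
  qed
  moreover have "I \<subseteq> {..<length Es}"
    using first_meetD(1) AA by (auto simp: I_def)
  ultimately have "(\<lambda>i. Min (Es!i)) ` I \<in> G"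
    by (rule gr_sel[rotated])
  then have "imax ` A \<in> G"
  proof (rule imax_image_mem[OF hereditary_G spreading_G _ _ strict_mono_on_Min_first_meet[OF adm B AA]])
    show "A \<subseteq> {..<p}"
      using AA B multi_meets_subset by blast
    show "(\<lambda>k. Min (Es!first_meet Es T k)) ` A \<subseteq> (\<lambda>i. Min (Es!i)) ` I"
      by (auto simp: I_def)
    show "\<forall>k\<in>A. Min (Es!first_meet Es T k) \<le> imax k"
      using Min_first_meet_le_imax[OF adm B] AA by blast
  qed
  then show ?thesis
    by (simp add: A_def)
qed

lemma block_term_one_group_le:
  assumes k: "k \<in> multi_meets Es T B - spread_meets Es T B gr" and B: "B \<subseteq> {..<p}"
    and gr: "X.grouping G c Es gr" and c: "0 < c" and n: "n \<ge> 1" and theta_n: "\<theta> n < \<epsilon> * c"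
  shows "block_term j n Es T k \<le> \<epsilon>"
proof -
  define u where "u = restr (T k) (xs k)"
  have kp: "k < p"
    using k B multi_meets_subset by blast
  have fu: "finite (supp u)"
    unfolding u_def by (rule finite_supp_restr_x[OF kp])
  define \<gamma> where "\<gamma> = gr (first_meet Es T k)"
  define S where "S = {i. i < length Es \<and> gr i = \<gamma>}"
  have same: "gr i = \<gamma>" if "i < length Es" "meets (Es!i) T k" for i
    using k that first_meetD(1,2) unfolding spread_meets_def \<gamma>_def by blast
  have "(\<Sum>i<length Es. X.iterate j (restr (Es!i) u)) = (\<Sum>i\<in>S. X.iterate j (restr (Es!i) u))"
  proof (rule sum.mono_neutral_right)
    show "\<forall>i\<in>{..<length Es} - S. X.iterate j (restr (Es!i) u) = 0"
    proof
      fix i assume "i \<in> {..<length Es} - S"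
      then have "\<not> meets (Es!i) T k"
        using same unfolding S_def by auto
      then show "X.iterate j (restr (Es!i) u) = 0"
        unfolding u_def by (simp add: restr_not_meets X.titer_zero)
    qed
  qed (auto simp: S_def)
  also have "\<dots> \<le> (\<Sum>i\<in>S. X.tsnorm (restr (Es!i) u))"
    by (intro sum_mono X.titer_le_tnorm finite_supp_restr fu)
  finally have sum_le: "(\<Sum>i<length Es. X.iterate j (restr (Es!i) u)) \<le> (\<Sum>i\<in>S. X.tsnorm (restr (Es!i) u))" .
  have group: "c * (\<Sum>i\<in>S. X.tsnorm (restr (Es!i) u)) \<le> 1"
    using gr fu tnorm_restr_x_le[OF kp] unfolding X.grouping_def S_def u_def by (meson order_trans)
  have "0 \<le> (\<Sum>i<length Es. X.iterate j (restr (Es!i) u))"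
    using X.titer_bounds finite_supp_restr[OF fu] by (intro sum_nonneg) auto
  then have "\<theta> n * (\<Sum>i<length Es. X.iterate j (restr (Es!i) u)) \<le> (\<epsilon> * c) * (\<Sum>i\<in>S. X.tsnorm (restr (Es!i) u))"
    using theta_n sum_le theta_bounds[OF n] eps c by (intro mult_mono) auto
  also have "\<dots> \<le> \<epsilon>"
    using group eps by (simp add: mult.assoc mult_left_le)
  finally show ?thesis
    unfolding u_def block_term_def .
qed

definition theta_star :: real where
  "theta_star = \<theta> (max 1 m0)"

lemma theta_star_pos: "0 < theta_star"
  unfolding theta_star_def using theta_bounds by simp

lemma theta_star_le: "1 \<le> n \<Longrightarrow> n < m0 \<Longrightarrow> theta_star \<le> \<theta> n"
  unfolding theta_star_def by (rule theta_antimono) auto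

text \<open>\<open>d\<close> bounds the number of nodes with \<open>n < m0\<close> that a branch can still pass before its
  weight drops below \<open>\<epsilon>\<close> (as \<open>w * \<theta> 1 ^ d < \<epsilon>\<close>); each of them costs \<open>w * \<parallel>z\<^sub>B\<parallel> / theta_star\<close>.\<close>

definition bound :: "nat \<Rightarrow> real \<Rightarrow> nat set \<Rightarrow> real" where
  "bound d w B = (1 + real d / theta_star) * w * X.tsnorm (basis_sum B)
     + w * TG.tsnorm (basis_sum B) + \<epsilon> * (\<Sum>k\<in>B. \<bar>a k\<bar>)"

lemma bound_ge:
  assumes B: "B \<subseteq> {..<p}" and w: "0 \<le> w"
  shows "w * X.tsnorm (basis_sum B) + w * TG.tsnorm (basis_sum B) + \<epsilon> * (\<Sum>k\<in>B. \<bar>a k\<bar>) \<le> bound d w B"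
proof -
  have "1 * (w * X.tsnorm (basis_sum B)) \<le> (1 + real d / theta_star) * (w * X.tsnorm (basis_sum B))"
    using theta_star_pos w X.tnorm_nonneg[OF finite_supp_basis_sum[OF B]] by (intro mult_right_mono) auto
  then show ?thesis
    unfolding bound_def by (simp add: mult.assoc)
qed

lemma bound_nonneg_parts:
  assumes B: "B \<subseteq> {..<p}" and w: "0 \<le> w"
  shows "0 \<le> w * X.tsnorm (basis_sum B)" "0 \<le> w * TG.tsnorm (basis_sum B)" "0 \<le> \<epsilon> * (\<Sum>k\<in>B. \<bar>a k\<bar>)"
  using w eps X.tnorm_nonneg[OF finite_supp_basis_sum[OF B]] TG.tnorm_nonneg[OF finite_supp_basis_sum[OF B]]
  by (simp_all add: sum_nonneg)

lemma hnorm_bound: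
  assumes B: "B \<subseteq> {..<p}" and w: "0 \<le> w"
  shows "w * hnorm (Fs 0) (restricted_sum T B) \<le> bound d w B"
proof -
  have "hnorm (Fs 0) (restricted_sum T B) \<le> X.tsnorm (basis_sum B)"
    using hnorm_restricted_sum_le[OF B, of T] X.hnorm_le_tnorm[OF finite_supp_basis_sum[OF B]] by linarith
  then have "w * hnorm (Fs 0) (restricted_sum T B) \<le> w * X.tsnorm (basis_sum B)"
    using w by (simp add: mult_left_mono)
  then show ?thesis
    using bound_ge[OF B w, of d] bound_nonneg_parts[OF B w] by linarith
qed

lemma small_weight_bound:
  assumes B: "B \<subseteq> {..<p}" and w: "0 \<le> w" "w \<le> \<epsilon>"
  shows "w * X.iterate j (restricted_sum T B) \<le> bound d w B"
proof -
  have "w * X.iterate j (restricted_sum T B) \<le> \<epsilon> * (\<Sum>k\<in>B. \<bar>a k\<bar>)"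
    using titer_restricted_sum_le[OF B] w
    by (intro mult_mono) (auto simp: sum_nonneg X.titer_bounds finite_supp_restricted_sum B)
  then show ?thesis
    using bound_ge[OF B w(1), of d] bound_nonneg_parts[OF B w(1)] by linarith
qed

lemma theta_sum_titer_split_weighted:
  assumes B: "B \<subseteq> {..<p}" and n: "n \<ge> 1" and w: "0 \<le> w"
  shows "w * (\<theta> n * (\<Sum>E\<leftarrow>Es. X.iterate j (restr E (restricted_sum T B))))
    \<le> (\<Sum>i<length Es. w * \<theta> n * X.iterate j (restricted_sum (\<lambda>k. Es!i \<inter> T k) (single_meets Es T B i)))
      + w * (\<Sum>k\<in>multi_meets Es T B. \<bar>a k\<bar> * block_term j n Es T k)"
  using mult_left_mono[OF theta_sum_titer_split_le[OF B n] w]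
  by (simp add: distrib_left sum_distrib_left mult.assoc)

lemma prod_theta_bounds:
  "\<forall>n\<in>set ns. n \<ge> 1 \<Longrightarrow> 0 < (\<Prod>n\<leftarrow>ns. \<theta> n) \<and> (\<Prod>n\<leftarrow>ns. \<theta> n) \<le> 1"
proof (induction ns)
  case (Cons n ns)
  then have "0 < \<theta> n" "\<theta> n < 1" "0 < (\<Prod>n\<leftarrow>ns. \<theta> n)" "(\<Prod>n\<leftarrow>ns. \<theta> n) \<le> 1"
    using theta_bounds by auto
  then show ?case
    by (simp add: mult_le_one)
qed simp

lemma sum_children_le_small_weight:
  assumes B: "B \<subseteq> {..<p}" and w: "0 \<le> w * \<theta> n" "w * \<theta> n \<le> \<epsilon>"
  shows "(\<Sum>i<length Es. w * \<theta> n * X.iterate j (restricted_sum (\<lambda>k. Es!i \<inter> T k) (single_meets Es T B i)))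
    \<le> \<epsilon> * (\<Sum>i<length Es. \<Sum>k\<in>single_meets Es T B i. \<bar>a k\<bar>)"
  unfolding sum_distrib_left[of \<epsilon> "\<lambda>i. \<Sum>k\<in>single_meets Es T B i. \<bar>a k\<bar>"]
proof (rule sum_mono)
  fix i
  have CB: "single_meets Es T B i \<subseteq> {..<p}"
    using single_meets_subset B by blast
  show "w * \<theta> n * X.iterate j (restricted_sum (\<lambda>k. Es!i \<inter> T k) (single_meets Es T B i))
      \<le> \<epsilon> * (\<Sum>k\<in>single_meets Es T B i. \<bar>a k\<bar>)"
    using titer_restricted_sum_le[OF CB] X.titer_bounds[OF finite_supp_restricted_sum[OF CB]] w eps
    by (intro mult_mono) auto
qed

lemma sum_multi_meets_le_high:
  assumes B: "B \<subseteq> {..<p}" and w: "0 \<le> w" "w \<le> 1"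
    and n: "n \<ge> 1" and adm: "admissible (Fs n) Es"
    and gr: "X.grouping G c Es gr" and c: "0 < c" and theta_n: "\<theta> n < \<epsilon> * c"
  shows "w * (\<Sum>k\<in>multi_meets Es T B. \<bar>a k\<bar> * block_term j n Es T k)
    \<le> w * TG.tsnorm (basis_sum B) + \<epsilon> * (\<Sum>k\<in>multi_meets Es T B - spread_meets Es T B gr. \<bar>a k\<bar>)"
proof -
  define A where "A = multi_meets Es T B"
  define A1 where "A1 = spread_meets Es T B gr"
  define Y where "Y k = block_term j n Es T k" for k
  have AB: "A \<subseteq> {..<p}"
    using multi_meets_subset B unfolding A_def by blast
  have A1A: "A1 \<subseteq> A"
    unfolding A_def A1_def spread_meets_def by auto
  have Y: "0 \<le> Y k \<and> Y k \<le> 1" if "k \<in> A" for k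
    using block_term_bounds[OF _ n adm] that AB unfolding Y_def by blast
  have "(\<Sum>k\<in>A1. \<bar>a k\<bar> * Y k) \<le> (\<Sum>k\<in>A1. \<bar>a k\<bar>)"
    using Y A1A by (intro sum_mono mult_right_le_one_le) auto
  also have "\<dots> \<le> TG.tsnorm (basis_sum B)"
    using sum_abs_le_tnorm_G[OF _ B imax_spread_meets_mem[OF adm B gr]] A1A multi_meets_subset
    unfolding A1_def A_def by blast
  finally have "w * (\<Sum>k\<in>A1. \<bar>a k\<bar> * Y k) \<le> w * TG.tsnorm (basis_sum B)"
    using w by (simp add: mult_left_mono)
  moreover have "w * (\<Sum>k\<in>A - A1. \<bar>a k\<bar> * Y k) \<le> \<epsilon> * (\<Sum>k\<in>A - A1. \<bar>a k\<bar>)"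
  proof -
    have "w * (\<Sum>k\<in>A - A1. \<bar>a k\<bar> * Y k) \<le> (\<Sum>k\<in>A - A1. \<bar>a k\<bar> * Y k)"
      using w Y by (intro mult_left_le_one_le sum_nonneg) auto
    also have "\<dots> \<le> (\<Sum>k\<in>A - A1. \<bar>a k\<bar> * \<epsilon>)"
      using block_term_one_group_le[OF _ B gr c n theta_n]
      unfolding A_def A1_def Y_def by (intro sum_mono mult_left_mono) auto
    finally show ?thesis
      by (simp add: sum_distrib_left mult.commute)
  qed
  moreover have "(\<Sum>k\<in>A. \<bar>a k\<bar> * Y k) = (\<Sum>k\<in>A1. \<bar>a k\<bar> * Y k) + (\<Sum>k\<in>A - A1. \<bar>a k\<bar> * Y k)"
    using sum.subset_diff[OF A1A finite_subset_blocks[OF AB]] by (simp add: add.commute)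
  ultimately show ?thesis
    unfolding A_def A1_def Y_def by (simp add: distrib_left)
qed

lemma node_bound_high:
  assumes B: "B \<subseteq> {..<p}" and w: "0 < w" "w \<le> 1"
    and n: "n \<ge> 1" and adm: "admissible (Fs n) Es" and high: "m0 \<le> n"
  shows "w * (\<theta> n * (\<Sum>E\<leftarrow>Es. X.iterate j (restr E (restricted_sum T B)))) \<le> bound d w B"
proof -
  obtain ns where ns: "\<forall>n\<in>set ns. n \<ge> 1" "\<theta> n < \<epsilon> * (\<Prod>n\<leftarrow>ns. \<theta> n)"
    "Fs n \<subseteq> fam_bracket G (map Fs ns)"
    using hyp high by blast
  define c where "c = (\<Prod>n\<leftarrow>ns. \<theta> n)"
  have "admissible (fam_bracket G (map Fs ns)) Es"
    using adm ns(3) unfolding admissible_def by blast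
  then obtain gr where gr: "X.grouping G c Es gr"
    using X.grouping_bracket[OF hereditary_G spreading_G] ns(1) unfolding c_def by blast
  have c: "0 < c" "c \<le> 1"
    using prod_theta_bounds[OF ns(1)] unfolding c_def by auto
  have "w * \<theta> n \<le> \<theta> n"
    using w theta_bounds[OF n] by (simp add: mult_left_le_one_le)
  also have "\<dots> \<le> \<epsilon>"
    using ns(2) mult_left_le[OF c(2) less_imp_le[OF eps]] unfolding c_def[symmetric] by linarith
  finally have "w * \<theta> n \<le> \<epsilon>" .
  then have "(\<Sum>i<length Es. w * \<theta> n * X.iterate j (restricted_sum (\<lambda>k. Es!i \<inter> T k) (single_meets Es T B i)))
      \<le> \<epsilon> * (\<Sum>i<length Es. \<Sum>k\<in>single_meets Es T B i. \<bar>a k\<bar>)"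
    using sum_children_le_small_weight[OF B] w theta_bounds[OF n] by simp
  moreover have "\<epsilon> * (\<Sum>i<length Es. \<Sum>k\<in>single_meets Es T B i. \<bar>a k\<bar>)
      + \<epsilon> * (\<Sum>k\<in>multi_meets Es T B - spread_meets Es T B gr. \<bar>a k\<bar>) \<le> \<epsilon> * (\<Sum>k\<in>B. \<bar>a k\<bar>)"
    using sum_abs_single_multi_le[OF B, of "multi_meets Es T B - spread_meets Es T B gr"] eps
    by (simp add: distrib_left[symmetric])
  ultimately show ?thesis
    using theta_sum_titer_split_weighted[OF B n, where w=w and j=j and Es=Es and T=T]
      sum_multi_meets_le_high[OF B _ w(2) n adm gr c(1) ns(2)[folded c_def], where j=j and T=T]
      w bound_ge[OF B, of w d] bound_nonneg_parts[OF B, of w]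
    by linarith
qed

lemma sum_children_le_low:
  assumes IH: "\<And>T B w. B \<subseteq> {..<p} \<Longrightarrow> 0 < w \<Longrightarrow> w \<le> 1 \<Longrightarrow> w * \<theta> 1 ^ d < \<epsilon> \<Longrightarrow>
        w * X.iterate j (restricted_sum T B) \<le> bound d w B"
    and B: "B \<subseteq> {..<p}" and w: "0 < w" "w \<le> 1" and wd: "w * \<theta> 1 ^ Suc d < \<epsilon>"
    and n: "n \<ge> 1" and adm: "admissible (Fs n) Es"
  shows "(\<Sum>i<length Es. w * \<theta> n * X.iterate j (restricted_sum (\<lambda>k. Es!i \<inter> T k) (single_meets Es T B i)))
    \<le> ((1 + real d / theta_star) * w) * X.tsnorm (basis_sum B) + w * TG.tsnorm (basis_sum B)
      + \<epsilon> * (\<Sum>i<length Es. \<Sum>k\<in>single_meets Es T B i. \<bar>a k\<bar>)"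
proof -
  define C where "C i = single_meets Es T B i" for i
  define K where "K = 1 + real d / theta_star"
  have CB: "\<forall>i<length Es. C i \<subseteq> B"
    using single_meets_subset unfolding C_def by blast
  have t: "0 < \<theta> n" "\<theta> n < 1" "\<theta> n \<le> \<theta> 1" "0 \<le> \<theta> 1 ^ d"
    using theta_bounds[OF n] theta_antimono[OF _ n] theta_bounds[of 1] by auto
  have "w * \<theta> n * \<theta> 1 ^ d \<le> w * \<theta> 1 * \<theta> 1 ^ d"
    using t w by (intro mult_right_mono mult_left_mono) auto
  moreover have "w * \<theta> 1 * \<theta> 1 ^ d = w * \<theta> 1 ^ Suc d"
    by (simp add: mult.assoc)
  ultimately have "w * \<theta> n * \<theta> 1 ^ d < \<epsilon>"
    using wd by linarith
  moreover have "0 < w * \<theta> n" "w * \<theta> n \<le> 1"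
    using t w by (simp_all add: mult_le_one)
  ultimately have theta_n: "0 < w * \<theta> n" "w * \<theta> n \<le> 1" "w * \<theta> n * \<theta> 1 ^ d < \<epsilon>"
    by blast+
  have "(\<Sum>i<length Es. w * \<theta> n * X.iterate j (restricted_sum (\<lambda>k. Es!i \<inter> T k) (C i)))
      \<le> (\<Sum>i<length Es. K * (w * \<theta> n) * X.tsnorm (basis_sum (C i))
           + w * \<theta> n * TG.tsnorm (basis_sum (C i)) + \<epsilon> * (\<Sum>k\<in>C i. \<bar>a k\<bar>))"
    using IH[OF _ theta_n] CB B unfolding bound_def K_def by (intro sum_mono) blast
  also have "\<dots> = (K * w) * (\<theta> n * (\<Sum>i<length Es. X.tsnorm (basis_sum (C i))))
        + w * (\<theta> n * (\<Sum>i<length Es. TG.tsnorm (basis_sum (C i)))) + \<epsilon> * (\<Sum>i<length Es. \<Sum>k\<in>C i. \<bar>a k\<bar>)"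
    by (simp add: sum.distrib sum_distrib_left mult.assoc mult.left_commute)
  also have "\<dots> \<le> (K * w) * X.tsnorm (basis_sum B) + w * TG.tsnorm (basis_sum B)
      + \<epsilon> * (\<Sum>i<length Es. \<Sum>k\<in>C i. \<bar>a k\<bar>)"
  proof -
    have sep: "\<forall>i i'. i < i' \<longrightarrow> i' < length Es \<longrightarrow> (\<forall>k\<in>C i. \<forall>k'\<in>C i'. k < k')"
      using single_meets_less[OF adm B] unfolding C_def by blast
    have lo: "\<forall>i<length Es. \<forall>k\<in>C i. Min (Es!i) \<le> imax k"
      using Min_le_imax_single_meets[OF adm B] unfolding C_def by blast
    have "0 \<le> K * w"
      using theta_star_pos w by (simp add: K_def)
    then show ?thesis
      using tnorm_basis_sum_family[OF X.tsirelson_norm_axioms n adm B CB sep lo]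
        tnorm_basis_sum_family[OF TG.tsirelson_norm_axioms n adm B CB sep lo] w eps
      by (intro add_mono mult_left_mono) auto
  qed
  finally show ?thesis
    unfolding C_def K_def .
qed

lemma sum_multi_meets_le_low:
  assumes B: "B \<subseteq> {..<p}" and w: "0 \<le> w"
    and n: "n \<ge> 1" and adm: "admissible (Fs n) Es" and low: "n < m0"
  shows "w * (\<Sum>k\<in>multi_meets Es T B. \<bar>a k\<bar> * block_term j n Es T k)
    \<le> w * (X.tsnorm (basis_sum B) / theta_star)"
proof -
  define A where "A = multi_meets Es T B"
  have AB: "A \<subseteq> B"
    using multi_meets_subset unfolding A_def by blast
  have "(\<Sum>k\<in>A. \<bar>a k\<bar> * block_term j n Es T k) \<le> (\<Sum>k\<in>A. \<bar>a k\<bar>)"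
    using block_term_bounds[OF _ n adm] AB B by (intro sum_mono mult_right_le_one_le) auto
  also have "\<dots> \<le> X.tsnorm (basis_sum B) / theta_star"
  proof -
    have "theta_star * (\<Sum>k\<in>A. \<bar>a k\<bar>) \<le> \<theta> n * (\<Sum>k\<in>A. \<bar>a k\<bar>)"
      by (rule mult_right_mono[OF theta_star_le[OF n low]]) (simp add: sum_nonneg)
    also have "\<dots> \<le> X.tsnorm (basis_sum A)"
      using theta_sum_abs_le_tnorm[OF n _ imax_multi_meets_mem[OF adm B]] AB B unfolding A_def by blast
    also have "\<dots> \<le> X.tsnorm (basis_sum B)"
      using X.tnorm_restr_le[OF finite_supp_basis_sum[OF B], of "imax ` A"] restr_basis_sum[OF AB B] by simp
    finally show ?thesis
      using theta_star_pos by (simp add: pos_le_divide_eq mult.commute)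
  qed
  finally show ?thesis
    unfolding A_def using w by (rule mult_left_mono)
qed

lemma node_bound_low:
  assumes IH: "\<And>T B w. B \<subseteq> {..<p} \<Longrightarrow> 0 < w \<Longrightarrow> w \<le> 1 \<Longrightarrow> w * \<theta> 1 ^ d < \<epsilon> \<Longrightarrow>
        w * X.iterate j (restricted_sum T B) \<le> bound d w B"
    and B: "B \<subseteq> {..<p}" and w: "0 < w" "w \<le> 1" and wd: "w * \<theta> 1 ^ Suc d < \<epsilon>"
    and n: "n \<ge> 1" and adm: "admissible (Fs n) Es" and low: "n < m0"
  shows "w * (\<theta> n * (\<Sum>E\<leftarrow>Es. X.iterate j (restr E (restricted_sum T B)))) \<le> bound (Suc d) w B"
proof -
  have "\<epsilon> * (\<Sum>i<length Es. \<Sum>k\<in>single_meets Es T B i. \<bar>a k\<bar>) \<le> \<epsilon> * (\<Sum>k\<in>B. \<bar>a k\<bar>)"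
    using sum_abs_single_multi_le[OF B, of "{}" Es T] eps by simp
  moreover have "bound (Suc d) w B = ((1 + real d / theta_star) * w) * X.tsnorm (basis_sum B)
      + w * (X.tsnorm (basis_sum B) / theta_star) + w * TG.tsnorm (basis_sum B) + \<epsilon> * (\<Sum>k\<in>B. \<bar>a k\<bar>)"
    using theta_star_pos unfolding bound_def by (simp add: field_simps)
  ultimately show ?thesis
    using theta_sum_titer_split_weighted[OF B n, where w=w and j=j and Es=Es and T=T]
      sum_children_le_low[OF IH B w wd n adm, where T=T]
      sum_multi_meets_le_low[OF B _ n adm low, where w=w and j=j and T=T] w
    by linarith
qed

lemma titer_bound:
  "B \<subseteq> {..<p} \<Longrightarrow> 0 < w \<Longrightarrow> w \<le> 1 \<Longrightarrow> w * \<theta> 1 ^ d < \<epsilon> \<Longrightarrow>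
    w * X.iterate j (restricted_sum T B) \<le> bound d w B"
proof (induction j arbitrary: d T B w)
  case 0
  then show ?case
    using hnorm_bound by simp
next
  case (Suc j)
  show ?case
  proof (cases "w \<le> \<epsilon>")
    case True
    then show ?thesis
      by (rule small_weight_bound[OF Suc.prems(1) less_imp_le[OF Suc.prems(2)]])
  next
    case False
    then obtain d' where d: "d = Suc d'"
      using Suc.prems(4) by (cases d) auto
    have "X.iterate (Suc j) (restricted_sum T B) \<le> bound d w B / w"
      unfolding titer.simps
    proof (rule X.tstep_least)
      show "hnorm (Fs 0) (restricted_sum T B) \<le> bound d w B / w"
        using hnorm_bound[OF Suc.prems(1), of w T d] Suc.prems(2) by (simp add: pos_le_divide_eq mult.commute)
      fix n Es assume n: "1 \<le> n" and adm: "admissible (Fs n) Es"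
      have "w * (\<theta> n * (\<Sum>E\<leftarrow>Es. X.iterate j (restr E (restricted_sum T B)))) \<le> bound d w B"
      proof (cases "n < m0")
        case True
        then show ?thesis
          using node_bound_low[OF Suc.IH Suc.prems(1-3) _ n adm] Suc.prems(4) d by simp
      next
        case False
        then show ?thesis
          using node_bound_high[OF Suc.prems(1-3) n adm] by simp
      qed
      then show "\<theta> n * (\<Sum>E\<leftarrow>Es. X.iterate j (restr E (restricted_sum T B))) \<le> bound d w B / w"
        using Suc.prems(2) by (simp add: pos_le_divide_eq mult.commute)
    qed
    then show ?thesis
      using Suc.prems(2) by (simp add: pos_le_divide_eq mult.commute)
  qed
qed

lemma tnorm_block_sum_le:
  assumes d: "\<theta> 1 ^ d < \<epsilon>"
  shows "tnorm (Fs 0) \<theta> Fs (\<lambda>i. \<Sum>k<p. a k * xs k i)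
    \<le> (1 + real d / \<theta> (max 1 m0)) * tnorm (Fs 0) \<theta> Fs (\<lambda>i. \<Sum>k<p. a k * unitvec (Max (supp (xs k))) i)
      + 2 * \<epsilon> * tnorm (\<Union>n. Fs n) \<theta> Fs (\<lambda>i. \<Sum>k<p. a k * unitvec (Max (supp (xs k))) i)
      + 2 * tnorm G \<theta> Fs (\<lambda>i. \<Sum>k<p. a k * unitvec (Max (supp (xs k))) i)
      + 2 * \<epsilon> * (\<Sum>k<p. \<bar>a k\<bar>)"
proof -
  interpret U: tsirelson_norm "\<Union>n. Fs n" \<theta> Fs
    by unfold_locales (use theta_bounds empty_mem in auto)
  have y: "(\<lambda>i. \<Sum>k<p. a k * xs k i) = restricted_sum (\<lambda>_. UNIV) {..<p}"
    by (simp add: restricted_sum_def restr_def)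
  have z: "(\<lambda>i. \<Sum>k<p. a k * unitvec (Max (supp (xs k))) i) = basis_sum {..<p}"
    by (simp add: basis_sum_def imax_def)
  have fin: "finite (supp (basis_sum {..<p}))"
    by (rule finite_supp_basis_sum) simp
  have "X.tsnorm (restricted_sum (\<lambda>_. UNIV) {..<p}) \<le> bound d 1 {..<p}"
    unfolding tnorm_def using titer_bound[of "{..<p}" 1 d] d by (intro cSUP_least) auto
  moreover have "bound d 1 {..<p} = (1 + real d / \<theta> (max 1 m0)) * X.tsnorm (basis_sum {..<p})
      + TG.tsnorm (basis_sum {..<p}) + \<epsilon> * (\<Sum>k<p. \<bar>a k\<bar>)"
    unfolding bound_def theta_star_def by simp
  moreover have "0 \<le> \<epsilon> * U.tsnorm (basis_sum {..<p})" "0 \<le> TG.tsnorm (basis_sum {..<p})"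
    "0 \<le> \<epsilon> * (\<Sum>k<p. \<bar>a k\<bar>)"
    using eps U.tnorm_nonneg[OF fin] TG.tnorm_nonneg[OF fin] by (simp_all add: sum_nonneg)
  ultimately show ?thesis
    unfolding y z by linarith
qed

end

theorem proposition3:
  fixes Fs :: "nat \<Rightarrow> nat set set" and \<theta> :: "nat \<Rightarrow> real"
    and \<epsilon> :: real and G :: "nat set set" and m0 :: nat
  assumes reg: "\<And>n. regular (Fs n)"
    and S0_sub: "\<And>n. S0 \<subseteq> Fs n"
    and regU: "regular (\<Union>n. Fs n)"
    and th_pos: "\<And>n. n \<ge> 1 \<Longrightarrow> 0 < \<theta> n \<and> \<theta> n < 1"
    and th_mono: "\<And>n. n \<ge> 1 \<Longrightarrow> \<theta> (Suc n) \<le> \<theta> n"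
    and th_null: "\<theta> \<longlonglongrightarrow> 0"
    and eps: "\<epsilon> > 0"
    and regG: "regular G"
    and hyp: "\<forall>m\<ge>m0. \<exists>ns. ns \<noteq> [] \<and> (\<forall>n\<in>set ns. n \<ge> 1) \<and>
               \<theta> m < \<epsilon> * (\<Prod>n\<leftarrow>ns. \<theta> n) \<and>
               Fs m \<subseteq> fam_bracket G (map Fs ns)"
  shows "\<exists>K::real. \<forall>(p::nat) (xs::nat \<Rightarrow> nat \<Rightarrow> real) (a::nat \<Rightarrow> real).
     ((\<forall>k<p. finite (supp (xs k)) \<and> supp (xs k) \<noteq> {} \<and> tnorm (Fs 0) \<theta> Fs (xs k) = 1) \<and>
      (\<forall>k. Suc k < p \<longrightarrow> Max (supp (xs k)) < Min (supp (xs (Suc k)))))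
     \<longrightarrow> (let y = (\<lambda>i. \<Sum>k<p. a k * xs k i);
             z = (\<lambda>i. \<Sum>k<p. a k * unitvec (Max (supp (xs k))) i)
         in tnorm (Fs 0) \<theta> Fs y
            \<le> K * tnorm (Fs 0) \<theta> Fs z
              + 2 * \<epsilon> * tnorm (\<Union>n. Fs n) \<theta> Fs z
              + 2 * tnorm G \<theta> Fs z
              + 2 * \<epsilon> * (\<Sum>k<p. \<bar>a k\<bar>))"
proof -
  obtain D where D: "\<theta> 1 ^ D < \<epsilon>"
    using real_arch_pow_inv[OF eps] th_pos[of 1] by auto
  have blocks: "mixed_tsirelson_blocks Fs \<theta> \<epsilon> G m0 p xs"
    if "(\<forall>k<p. finite (supp (xs k)) \<and> supp (xs k) \<noteq> {} \<and> tnorm (Fs 0) \<theta> Fs (xs k) = 1) \<and>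
      (\<forall>k. Suc k < p \<longrightarrow> Max (supp (xs k)) < Min (supp (xs (Suc k))))" for p xs
    using that by unfold_locales (use reg S0_sub th_pos th_mono eps regG hyp in auto)
  show ?thesis
    unfolding Let_def
    using mixed_tsirelson_blocks.tnorm_block_sum_le[where \<theta>=\<theta> and \<epsilon>=\<epsilon>, OF blocks D]
    by (intro exI[of _ "1 + real D / \<theta> (max 1 m0)"] allI impI) blast
qed

end
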